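(* Let $\mathcal{W}',\hat{\mathcal{W}}'\in\mathbb{K}^{I_1\times\cdots\times I_\ell}$ have multilinear ranks $(R_1,\dots,R_\ell)$ and $(\hat{R}_1,\dots,\hat{R}_\ell)$ respectively. Fix $j$ and let $\mathbf{V}\in\mathbb{K}^{I_j\times R_j}$ have orthonormal columns whose range equals the span of the mode-$j$ fibers of $\mathcal{W}'$. If $\hat{R}_j\leq R_j$, then there is $\hat{\mathbf{V}}\in\mathbb{K}^{I_j\times R_j}$ with orthonormal columns whose range contains the span of the mode-$j$ fibers of $\hat{\mathcal{W}}'$, such that $$\|\mathcal{W}'\cdot_j\mathbf{V}^{\mathrm{H}}-\hat{\mathcal{W}}'\cdot_j\hat{\mathbf{V}}^{\mathrm{H}}\|_{\mathrm{F}}\leq\|\mathcal{W}'-\hat{\mathcal{W}}'\|_{\mathrm{F}}.$$ Consequently, with $R^*_i=\max\{R_i,\hat{R}_i\}$, there exist orthogonal compressions $\mathcal{W},\hat{\mathcal{W}}\in\mathbb{K}^{R^*_1\times\cdots\times R^*_\ell}$ of $\mathcal{W}'$ and $\hat{\mathcal{W}}'$ respectively with $\|\mathcal{W}-\hat{\mathcal{W}}\|_{\mathrm{F}}\leq\|\mathcal{W}'-\hat{\mathcal{W}}'\|_{\mathrm{F}}$.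
   Context: $\mathbb{K}$ denotes $\mathbb{R}$ or $\mathbb{C}$. Mode-$i$ fibers of an order-$\ell$ tensor are the vectors obtained by varying the $i$th index with the others fixed; the multilinear rank is $(R_1,\dots,R_\ell)$ with $R_i$ the dimension of the span of the mode-$i$ fibers. $\mathcal{X}\cdot_i\mathbf{M}$ applies the matrix $\mathbf{M}$ to every mode-$i$ fiber. Here an orthogonal compression of $\mathcal{X}\in\mathbb{K}^{I_1\times\cdots\times I_\ell}$ to size $R^*_1\times\cdots\times R^*_\ell$ means $\mathcal{X}\cdot_1\mathbf{V}_1^{\mathrm{H}}\cdots\cdot_\ell\mathbf{V}_\ell^{\mathrm{H}}$ where each $\mathbf{V}_i\in\mathbb{K}^{I_i\times R^*_i}$ has orthonormal columns whose range contains the span of the mode-$i$ fibers of $\mathcal{X}$. *)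

theory Defs
  imports Complex_Main "Jordan_Normal_Form.Schur_Decomposition" "Jordan_Normal_Form.VS_Connect"
begin

text \<open>The scalar field K (real or complex): a normed field with a conjugation
  compatible with the norm.  Instances: real and complex.\<close>
class rc_field = conjugatable_field + real_normed_field +
  assumes mult_conjugate_norm: "x * conjugate x = (norm x)^2 *\<^sub>R 1"

instance real :: rc_field
  by standard (simp add: power2_eq_square)

instance complex :: rc_field
  by standard (metis complex_norm_square conjugate_complex_def mult.right_neutral scaleR_conv_of_real)

text \<open>An order-l tensor with dimensions I = [I_1,...,I_l] is a function on index
  lists; only the values on valid index lists (tidx I) are relevant.
  Indices are 0-based.\<close>
type_synonym 'a tensor = "nat list \<Rightarrow> 'a"

definition tidx :: "nat list \<Rightarrow> nat list set" where
  "tidx I = {is. length is = length I \<and> (\<forall>k<length I. is ! k < I ! k)}"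

definition fiber :: "'a tensor \<Rightarrow> nat list \<Rightarrow> nat \<Rightarrow> nat list \<Rightarrow> 'a vec" where
  "fiber X I j is = vec (I ! j) (\<lambda>t. X (is[j := t]))"

definition mode_fibers :: "nat list \<Rightarrow> nat \<Rightarrow> 'a tensor \<Rightarrow> 'a vec set" where
  "mode_fibers I j X = fiber X I j ` tidx I"

definition fiber_span :: "nat list \<Rightarrow> nat \<Rightarrow> 'a::field tensor \<Rightarrow> 'a vec set" where
  "fiber_span I j X = LinearCombinations.module.span class_ring (module_vec TYPE('a) (I ! j)) (mode_fibers I j X)"

definition mlrank_mode :: "nat list \<Rightarrow> nat \<Rightarrow> 'a::field tensor \<Rightarrow> nat" where
  "mlrank_mode I j X =
     vectorspace.dim class_ring ((module_vec TYPE('a) (I ! j))\<lparr>carrier := fiber_span I j X\<rparr>)"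

definition has_mlrank :: "nat list \<Rightarrow> 'a::field tensor \<Rightarrow> nat list \<Rightarrow> bool" where
  "has_mlrank I X R \<longleftrightarrow> length R = length I \<and> (\<forall>j<length I. mlrank_mode I j X = R ! j)"

text \<open>Mode-j product X \<cdot>_j M: M applied to every mode-j fiber
  (the mode-j dimension of X is dim_col M; the result has mode-j dimension dim_row M).\<close>
definition mode_prod :: "'a::comm_ring tensor \<Rightarrow> nat \<Rightarrow> 'a mat \<Rightarrow> 'a tensor" where
  "mode_prod X j M = (\<lambda>is. \<Sum>t<dim_col M. M $$ (is ! j, t) * X (is[j := t]))"

definition frob :: "nat list \<Rightarrow> 'a::real_normed_field tensor \<Rightarrow> real" where
  "frob I X = sqrt (\<Sum>is\<in>tidx I. (norm (X is))^2)"

definition orthonormal_cols :: "'a::conjugatable_field mat \<Rightarrow> bool" where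
  "orthonormal_cols V \<longleftrightarrow> mat_adjoint V * V = 1\<^sub>m (dim_col V)"

definition mat_range :: "'a::comm_ring mat \<Rightarrow> 'a vec set" where
  "mat_range V = {V *\<^sub>v x | x. x \<in> carrier_vec (dim_col V)}"

text \<open>X \<cdot>_1 V_1^H \<cdot>_2 V_2^H ... \<cdot>_l V_l^H (modes 0-based).\<close>
definition compress :: "'a::conjugatable_field tensor \<Rightarrow> 'a mat list \<Rightarrow> 'a tensor" where
  "compress X Vs = foldl (\<lambda>Y (i, V). mode_prod Y i (mat_adjoint V)) X (zip [0..<length Vs] Vs)"

definition orth_compression_mats ::
  "nat list \<Rightarrow> 'a::conjugatable_field tensor \<Rightarrow> nat list \<Rightarrow> 'a mat list \<Rightarrow> bool" where
  "orth_compression_mats I X Rs Vs \<longleftrightarrow>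
     length Vs = length I \<and> length Rs = length I \<and>
     (\<forall>i<length I. Vs ! i \<in> carrier_mat (I ! i) (Rs ! i) \<and> orthonormal_cols (Vs ! i) \<and>
        fiber_span I i X \<subseteq> mat_range (Vs ! i))"

end

(* Fix a mode j.  The mode-j fibers of W' are w = V x, and those of Wh' lie in the range of some B
   with orthonormal columns of the same width, so they are w' = B y.  For every unitary Z the basis
   Vh = B Z^H has the same range as B and gives coordinates Vh^H w' = Z y, whence

     sum |V^H w - Vh^H w'|^2 = sum (|x|^2 + |y|^2) - 2 Re tr(Z G),
     sum |w - w'|^2          = sum (|x|^2 + |y|^2) - 2 Re tr(V^H B G),      G = sum y x^H.

   V^H B is a contraction, and the unitary polar factor Z of G (orthogonal Procrustes) maximizes
   Re tr(D G) over all contractions D; it is built from the spectral theorem for G^H G.  As the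
   scalars form an abstract real-or-complex field, that theorem rests on the existence of complex
   eigenvalues, transported through an embedding of the field into the complex numbers.

   For the compressions, the modes are treated one after another: a mode-k product leaves the
   mode-i fibers (i ~= k) in the span of the old ones, so each step is an instance of the first
   claim and the Frobenius distance never increases. *)

theory Submission
  imports Defs "Jordan_Normal_Form.Spectral_Radius"
begin

section \<open>The scalar field\<close>

lemma mult_conjugate_eq_norm_sq: "(x::'a::rc_field) * conjugate x = of_real ((norm x)^2)"
  using mult_conjugate_norm[of x] by (simp add: of_real_def)

lemma conjugate_one [simp]: "conjugate (1::'a::rc_field) = 1"
  using mult_conjugate_eq_norm_sq[of "1::'a"] by simp

lemma conjugate_diff: "conjugate (a - b :: 'a::conjugatable_ring) = conjugate a - conjugate b"
  by (metis conjugate_dist_add conjugate_neg diff_conv_add_uminus)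

lemmas conjugate_simps = conjugate_dist_add conjugate_dist_mul conjugate_neg conjugate_diff

text \<open>The class provides no real part; it is recovered from the norm by polarization.\<close>

definition real_part :: "'a::rc_field \<Rightarrow> real" where
  "real_part z = ((norm (1 + z))^2 - 1 - (norm z)^2) / 2"

lemma add_conjugate_eq_real_part: "z + conjugate z = 2 * (of_real (real_part z) :: 'a::rc_field)"
proof -
  have "(1 + z) * conjugate (1 + z) = of_real ((norm (1 + z))^2)"
    by (rule mult_conjugate_eq_norm_sq)
  also have "(1 + z) * conjugate (1 + z) = 1 + (z + conjugate z) + z * conjugate z"
    by (simp add: conjugate_dist_add algebra_simps)
  finally have "z + conjugate z = of_real ((norm (1 + z))^2) - 1 - of_real ((norm z)^2)"
    unfolding mult_conjugate_eq_norm_sq by (simp add: algebra_simps)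
  also have "\<dots> = of_real (2 * real_part z)"
    unfolding real_part_def by simp
  finally show ?thesis by simp
qed

lemma real_part_eqI:
  assumes "z + conjugate z = 2 * (of_real c :: 'a::rc_field)"
  shows "real_part z = c"
proof -
  have "2 * (of_real (real_part z) :: 'a) = 2 * of_real c"
    using assms add_conjugate_eq_real_part[of z] by simp
  then show ?thesis by simp
qed

lemma conjugate_of_real [simp]: "conjugate (of_real c :: 'a::rc_field) = of_real c"
proof -
  define u :: 'a where "u = of_real c"
  have conj_u: "conjugate u = of_real (2 * real_part u - c)"
    using add_conjugate_eq_real_part[of u] unfolding u_def by (simp add: algebra_simps)
  have "u * conjugate u = of_real (c^2)"
    using mult_conjugate_eq_norm_sq[of u] unfolding u_def by simp
  then have "(of_real (c * (2 * real_part u - c)) :: 'a) = of_real (c^2)"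
    unfolding conj_u unfolding u_def by (metis of_real_mult)
  then have "c * (2 * real_part u - c) = c^2"
    using of_real_eq_iff by blast
  then have "c = 0 \<or> 2 * real_part u - c = c"
    by (simp add: power2_eq_square)
  then show ?thesis
    using conj_u unfolding u_def by auto
qed

lemma real_part_add [simp]: "real_part (z + w :: 'a::rc_field) = real_part z + real_part w"
  by (rule real_part_eqI)
    (use add_conjugate_eq_real_part[of z] add_conjugate_eq_real_part[of w]
      in \<open>simp add: conjugate_dist_add algebra_simps\<close>)

lemma real_part_minus [simp]: "real_part (- z :: 'a::rc_field) = - real_part z"
  by (rule real_part_eqI)
    (use add_conjugate_eq_real_part[of z] in \<open>simp add: conjugate_neg algebra_simps\<close>)

lemma real_part_diff [simp]: "real_part (z - w :: 'a::rc_field) = real_part z - real_part w"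
  using real_part_add[of z "- w"] by simp

lemma real_part_zero [simp]: "real_part (0::'a::rc_field) = 0"
  using real_part_add[of "0::'a" 0] by simp

lemma real_part_of_real_mult [simp]:
  "real_part (of_real c * z :: 'a::rc_field) = c * real_part z"
proof (rule real_part_eqI)
  have "of_real c * z + conjugate (of_real c * z) = of_real c * (z + conjugate z)"
    by (simp add: conjugate_dist_mul distrib_left)
  then show "of_real c * z + conjugate (of_real c * z) = 2 * (of_real (c * real_part z) :: 'a)"
    unfolding add_conjugate_eq_real_part by simp
qed

lemma real_part_mult_of_real [simp]:
  "real_part (z * of_real c :: 'a::rc_field) = c * real_part z"
  using real_part_of_real_mult[of c z] by (simp add: mult.commute)

lemma real_part_of_real [simp]: "real_part (of_real c :: 'a::rc_field) = c"
  using real_part_of_real_mult[of c 1] by (simp add: real_part_eqI)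

lemma real_part_conjugate [simp]: "real_part (conjugate z :: 'a::rc_field) = real_part z"
  by (rule real_part_eqI) (simp add: add_conjugate_eq_real_part[symmetric] add.commute)

lemma real_part_sum: "real_part (sum f A :: 'a::rc_field) = (\<Sum>x\<in>A. real_part (f x))"
  by (induct A rule: infinite_finite_induct) auto

lemma norm_diff_sq:
  "(norm ((a::'a::rc_field) - b))^2 = (norm a)^2 + (norm b)^2 - 2 * real_part (a * conjugate b)"
proof -
  have "of_real ((norm (a - b))^2) = (a - b) * conjugate (a - b)"
    by (simp add: mult_conjugate_eq_norm_sq)
  also have "\<dots> = a * conjugate a + b * conjugate b - (a * conjugate b + conjugate (a * conjugate b))"
    by (simp add: conjugate_simps algebra_simps)
  also have "\<dots> = of_real ((norm a)^2 + (norm b)^2 - 2 * real_part (a * conjugate b))"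
    by (simp add: mult_conjugate_eq_norm_sq add_conjugate_eq_real_part)
  finally show ?thesis
    using of_real_eq_iff by blast
qed

lemma self_conjugate_eq_of_real:
  "conjugate z = z \<Longrightarrow> z = (of_real (real_part z) :: 'a::rc_field)"
  using add_conjugate_eq_real_part[of z] by simp

lemma conjugate_imaginary_part:
  "conjugate (z - of_real (real_part z)) = - (z - of_real (real_part z) :: 'a::rc_field)"
proof -
  have "conjugate z = 2 * of_real (real_part z) - z"
    using add_conjugate_eq_real_part[of z] by (simp add: algebra_simps)
  then show ?thesis
    by (simp add: conjugate_diff)
qed

lemma of_real_real_part_if_no_sqrt_minus_one:
  assumes no_sqrt: "\<not> (\<exists>i::'a::rc_field. i * i = -1)"
  shows "(x::'a) = of_real (real_part x)"
proof (rule ccontr)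
  define y where "y = x - of_real (real_part x)"
  assume "x \<noteq> of_real (real_part x)"
  then have "norm y \<noteq> 0"
    unfolding y_def by simp
  have "conjugate y = - y"
    unfolding y_def by (rule conjugate_imaginary_part)
  then have "y * y = - (y * conjugate y)"
    by simp
  also have "\<dots> = - of_real ((norm y)^2)"
    by (simp add: mult_conjugate_eq_norm_sq)
  finally have "(y / of_real (norm y)) * (y / of_real (norm y)) = -1"
    using \<open>norm y \<noteq> 0\<close> by (simp add: power2_eq_square flip: of_real_mult)
  then show False
    using no_sqrt by blast
qed

definition imag_unit :: "'a::rc_field" where
  "imag_unit = (SOME i. i * i = -1)"

context
  assumes sqrt_minus_one: "\<exists>i::'a::rc_field. i * i = -1"
begin

lemma imag_unit_sq: "imag_unit * imag_unit = (-1::'a)"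
  unfolding imag_unit_def by (rule someI_ex[OF sqrt_minus_one])

lemma conjugate_imag_unit: "conjugate (imag_unit::'a) = - imag_unit"
proof -
  have "norm ((imag_unit::'a) * imag_unit) = 1"
    unfolding imag_unit_sq by simp
  then have "(norm (imag_unit::'a))^2 = 1"
    by (simp add: norm_mult power2_eq_square)
  then have "imag_unit * conjugate imag_unit = (1::'a)"
    by (simp add: mult_conjugate_eq_norm_sq)
  moreover have "imag_unit * - imag_unit = (1::'a)"
    using imag_unit_sq by simp
  moreover have "(imag_unit::'a) \<noteq> 0"
    using imag_unit_sq by auto
  ultimately show ?thesis
    by (metis mult_left_cancel)
qed

lemma real_part_imag_unit: "real_part (imag_unit::'a) = 0"
  using real_part_conjugate[of "imag_unit::'a"] conjugate_imag_unit by simp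

lemma real_imag_decomposition:
  "x = of_real (real_part x) + of_real (real_part (- (imag_unit * x))) * (imag_unit::'a)"
proof -
  define y where "y = x - of_real (real_part x)"
  define z where "z = - (imag_unit * y)"
  have "conjugate y = - y"
    unfolding y_def by (rule conjugate_imaginary_part)
  then have "conjugate z = z"
    unfolding z_def using conjugate_imag_unit by (simp add: conjugate_simps)
  then have z: "z = of_real (real_part z)"
    by (rule self_conjugate_eq_of_real)
  have "imag_unit * z = - ((imag_unit * imag_unit) * y)"
    unfolding z_def by (simp add: algebra_simps)
  then have "imag_unit * z = y"
    unfolding imag_unit_sq by simp
  then have "x = of_real (real_part x) + imag_unit * of_real (real_part z)"
    using z unfolding y_def by (metis add.commute diff_add_cancel)
  moreover have "real_part z = real_part (- (imag_unit * x))"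
    unfolding z_def y_def using real_part_imag_unit by (simp add: algebra_simps)
  ultimately show ?thesis
    by (simp add: mult.commute)
qed

lemma real_part_of_real_imag:
  "real_part (of_real a + of_real b * (imag_unit::'a)) = a"
  using real_part_imag_unit by simp

lemma imag_part_of_real_imag:
  "real_part (- (imag_unit * (of_real a + of_real b * (imag_unit::'a)))) = b"
proof -
  have "- (imag_unit * (of_real a + of_real b * imag_unit)) =
      - (of_real a * imag_unit) - of_real b * (imag_unit * (imag_unit::'a))"
    by (simp add: algebra_simps)
  then show ?thesis
    using real_part_imag_unit by (simp add: imag_unit_sq)
qed

end

text \<open>Either no element squares to \<open>-1\<close> and every scalar is real, or every scalar is
  \<open>a + b i\<close> with \<open>i = imag_unit\<close>; in both cases \<open>to_complex\<close> embeds the field into \<open>complex\<close>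
  compatibly with conjugation.  This transports eigenvalue existence from complex matrices.\<close>

definition to_complex :: "'a::rc_field \<Rightarrow> complex" where
  "to_complex x =
     (if \<exists>i::'a. i * i = -1 then Complex (real_part x) (real_part (- (imag_unit * x)))
      else complex_of_real (real_part x))"

lemma to_complex_of_real_imag:
  assumes "\<exists>i::'a::rc_field. i * i = -1"
  shows "to_complex (of_real a + of_real b * (imag_unit::'a)) = Complex a b"
  unfolding to_complex_def
  using assms real_part_of_real_imag[OF assms] imag_part_of_real_imag[OF assms] by simp

lemma to_complex_add: "to_complex (x + y :: 'a::rc_field) = to_complex x + to_complex y"
  unfolding to_complex_def by (auto simp: algebra_simps complex_eq_iff)

lemma to_complex_of_real [simp]: "to_complex (of_real c :: 'a::rc_field) = complex_of_real c"
proof (cases "\<exists>i::'a. i * i = -1")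
  case True
  then have "to_complex (of_real c + of_real 0 * (imag_unit::'a)) = Complex c 0"
    by (rule to_complex_of_real_imag)
  then show ?thesis
    by (simp add: complex_eq_iff)
qed (simp add: to_complex_def)

lemma to_complex_mult: "to_complex (x * y :: 'a::rc_field) = to_complex x * to_complex y"
proof (cases "\<exists>i::'a. i * i = -1")
  case True
  define a b c d where "a = real_part x" and "b = real_part (- (imag_unit * x))"
    and "c = real_part y" and "d = real_part (- (imag_unit * y))"
  have x: "x = of_real a + of_real b * imag_unit" and y: "y = of_real c + of_real d * imag_unit"
    unfolding a_def b_def c_def d_def by (rule real_imag_decomposition[OF True])+
  have "(of_real a + of_real b * imag_unit) * (of_real c + of_real d * imag_unit) =
     of_real a * of_real c + (of_real b * of_real d) * (imag_unit * imag_unit) +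
     (of_real a * of_real d + of_real b * of_real c) * (imag_unit::'a)"
    by (simp add: algebra_simps)
  then have "x * y = of_real (a * c - b * d) + of_real (a * d + b * c) * imag_unit"
    unfolding x y imag_unit_sq[OF True] by simp
  then have "to_complex (x * y) = Complex (a * c - b * d) (a * d + b * c)"
    using to_complex_of_real_imag[OF True] by metis
  moreover have "to_complex x = Complex a b" "to_complex y = Complex c d"
    using to_complex_of_real_imag[OF True] x y by metis+
  ultimately show ?thesis
    by (simp add: complex_eq_iff)
next
  case False
  then have "x * y = of_real (real_part x) * of_real (real_part y)"
    using of_real_real_part_if_no_sqrt_minus_one by metis
  then have "real_part (x * y) = real_part x * real_part y"
    by (metis of_real_mult real_part_of_real)
  then show ?thesis
    unfolding to_complex_def using False by simp
qed

lemma to_complex_inj: "to_complex (x :: 'a::rc_field) = to_complex y \<Longrightarrow> x = y"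
proof (cases "\<exists>i::'a. i * i = -1")
  case True
  assume "to_complex x = to_complex y"
  then have "real_part x = real_part y"
    and "real_part (- (imag_unit * x)) = real_part (- (imag_unit * y))"
    unfolding to_complex_def using True by auto
  then show ?thesis
    using real_imag_decomposition[OF True, of x] real_imag_decomposition[OF True, of y] by metis
next
  case False
  assume "to_complex x = to_complex y"
  then have "real_part x = real_part y"
    unfolding to_complex_def using False by auto
  then show ?thesis
    using of_real_real_part_if_no_sqrt_minus_one[OF False] by metis
qed

lemma to_complex_conjugate: "to_complex (conjugate x :: 'a::rc_field) = cnj (to_complex x)"
proof (cases "\<exists>i::'a. i * i = -1")
  case True
  define a b where "a = real_part x" and "b = real_part (- (imag_unit * x))"
  have x: "x = of_real a + of_real b * imag_unit"
    unfolding a_def b_def by (rule real_imag_decomposition[OF True])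
  have "conjugate x = of_real a + of_real (- b) * imag_unit"
    unfolding x using conjugate_imag_unit[OF True] by (simp add: conjugate_simps)
  then have "to_complex (conjugate x) = Complex a (- b)"
    using to_complex_of_real_imag[OF True, of a "- b"] by metis
  moreover have "to_complex x = Complex a b"
    using to_complex_of_real_imag[OF True] x by metis
  ultimately show ?thesis
    by (simp add: complex_eq_iff)
qed (simp add: to_complex_def)

interpretation to_complex: comm_ring_hom "to_complex :: 'a::rc_field \<Rightarrow> complex"
proof
  show "to_complex 1 = 1" "to_complex 0 = 0"
    using to_complex_of_real[of 1] to_complex_of_real[of 0] by simp_all
  fix x y :: 'a
  show "to_complex (x * y) = to_complex x * to_complex y"
    by (rule to_complex_mult)
  show "to_complex (x + y) = to_complex x + to_complex y"
    by (rule to_complex_add)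
qed

section \<open>Adjoints and squared norms\<close>

lemma mat_adjoint_dim [simp]:
  "dim_row (mat_adjoint A) = dim_col A" "dim_col (mat_adjoint A) = dim_row A"
  unfolding mat_adjoint_def by simp_all

lemma mat_adjoint_index [simp]:
  "i < dim_col A \<Longrightarrow> j < dim_row A \<Longrightarrow> mat_adjoint A $$ (i, j) = conjugate (A $$ (j, i))"
  unfolding mat_adjoint_def by (simp add: mat_of_rows_index)

lemma mat_adjoint_carrier [simp]: "A \<in> carrier_mat n m \<Longrightarrow> mat_adjoint A \<in> carrier_mat m n"
  by auto

lemma mat_adjoint_adjoint [simp]: "mat_adjoint (mat_adjoint (A::'a::conjugatable_field mat)) = A"
  by (rule eq_matI) auto

lemma mat_adjoint_mult:
  fixes A :: "'a::conjugatable_field mat"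
  assumes "A \<in> carrier_mat n m" "B \<in> carrier_mat m k"
  shows "mat_adjoint (A * B) = mat_adjoint B * mat_adjoint A"
proof (rule eq_matI)
  fix i j
  assume "i < dim_row (mat_adjoint B * mat_adjoint A)" "j < dim_col (mat_adjoint B * mat_adjoint A)"
  then have i: "i < k" and j: "j < n"
    using assms by auto
  have "mat_adjoint (A * B) $$ (i, j) = conjugate (\<Sum>l<m. A $$ (j, l) * B $$ (l, i))"
    using assms i j by (simp add: scalar_prod_def row_def col_def atLeast0LessThan)
  also have "\<dots> = (\<Sum>l<m. conjugate (B $$ (l, i)) * conjugate (A $$ (j, l)))"
    by (simp add: sum_conjugate conjugate_dist_mul mult.commute)
  also have "\<dots> = (mat_adjoint B * mat_adjoint A) $$ (i, j)"
    using assms i j by (simp add: scalar_prod_def row_def col_def atLeast0LessThan)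
  finally show "mat_adjoint (A * B) $$ (i, j) = (mat_adjoint B * mat_adjoint A) $$ (i, j)" .
qed (use assms in auto)

lemma cscalar_mult_mat_vec:
  fixes A :: "'a::conjugatable_field mat"
  assumes A: "A \<in> carrier_mat n m" and x: "x \<in> carrier_vec m" and y: "y \<in> carrier_vec n"
  shows "(A *\<^sub>v x) \<bullet>c y = x \<bullet>c (mat_adjoint A *\<^sub>v y)"
proof -
  have "(A *\<^sub>v x) \<bullet>c y = (\<Sum>i<n. (\<Sum>l<m. A $$ (i, l) * x $ l) * conjugate (y $ i))"
    using A x y by (simp add: scalar_prod_def row_def atLeast0LessThan)
  also have "\<dots> = (\<Sum>i<n. \<Sum>l<m. x $ l * (A $$ (i, l) * conjugate (y $ i)))"
    by (simp add: sum_distrib_left sum_distrib_right mult_ac)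
  also have "\<dots> = (\<Sum>l<m. \<Sum>i<n. x $ l * (A $$ (i, l) * conjugate (y $ i)))"
    by (rule sum.swap)
  also have "\<dots> = x \<bullet>c (mat_adjoint A *\<^sub>v y)"
    using A x y by (simp add: scalar_prod_def row_def atLeast0LessThan sum_distrib_left
        sum_conjugate conjugate_dist_mul)
  finally show ?thesis .
qed

lemma cscalar_commute:
  fixes a b :: "'a::conjugatable_field vec"
  assumes "a \<in> carrier_vec n" "b \<in> carrier_vec n"
  shows "b \<bullet>c a = conjugate (a \<bullet>c b)"
  using assms by (simp add: scalar_prod_def sum_conjugate conjugate_dist_mul mult.commute)

lemma mat_adjoint_mult_index:
  fixes B :: "'a::conjugatable_field mat"
  assumes "B \<in> carrier_mat n k" "C \<in> carrier_mat n m" "i < k" "j < m"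
  shows "(mat_adjoint B * C) $$ (i, j) = col C j \<bullet>c col B i"
  using assms by (simp add: scalar_prod_def row_def col_def mult.commute)

lemma mat_adjoint_mult_vec_index:
  fixes B :: "'a::conjugatable_field mat"
  assumes "B \<in> carrier_mat n k" "x \<in> carrier_vec n" "i < k"
  shows "(mat_adjoint B *\<^sub>v x) $ i = x \<bullet>c col B i"
  using assms by (simp add: scalar_prod_def row_def col_def mult.commute)

lemma mult_mat_vec_zero: "A \<in> carrier_mat n k \<Longrightarrow> A *\<^sub>v 0\<^sub>v k = (0\<^sub>v n :: 'a::semiring_0 vec)"
  by (intro eq_vecI) (auto simp: scalar_prod_def)

lemma mult_zero_mat_vec: "v \<in> carrier_vec m \<Longrightarrow> 0\<^sub>m k m *\<^sub>v v = (0\<^sub>v k :: 'a::semiring_0 vec)"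
  by (intro eq_vecI) (auto simp: scalar_prod_def)

definition sq_norm_vec :: "'a::rc_field vec \<Rightarrow> real" where
  "sq_norm_vec v = (\<Sum>i<dim_vec v. (norm (v $ i))^2)"

lemma cscalar_self: "v \<bullet>c v = (of_real (sq_norm_vec v) :: 'a::rc_field)"
  by (simp add: scalar_prod_def sq_norm_vec_def mult_conjugate_eq_norm_sq atLeast0LessThan)

lemma sq_norm_vec_nonneg: "sq_norm_vec v \<ge> 0"
  unfolding sq_norm_vec_def by (simp add: sum_nonneg)

lemma sq_norm_vec_eq_1: "(v::'a::rc_field vec) \<bullet>c v = 1 \<Longrightarrow> sq_norm_vec v = 1"
  unfolding cscalar_self by (metis of_real_1 of_real_eq_iff)

lemma sq_norm_vec_pos:
  assumes "v \<in> carrier_vec n" "v \<noteq> 0\<^sub>v n"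
  shows "sq_norm_vec v > 0"
proof -
  have "sq_norm_vec v \<noteq> 0"
  proof
    assume "sq_norm_vec v = 0"
    then have "\<forall>i\<in>{..<dim_vec v}. (norm (v $ i))^2 = 0"
      unfolding sq_norm_vec_def by (subst sum_nonneg_eq_0_iff[symmetric]) auto
    then have "v = 0\<^sub>v n"
      using assms(1) by (intro eq_vecI) auto
    then show False
      using assms(2) by simp
  qed
  then show ?thesis
    using sq_norm_vec_nonneg[of v] by linarith
qed

lemma cscalar_self_neq_0:
  assumes "v \<in> carrier_vec n" "v \<noteq> 0\<^sub>v n"
  shows "v \<bullet>c v \<noteq> (0::'a::rc_field)"
  using sq_norm_vec_pos[OF assms] unfolding cscalar_self by simp

lemma sq_norm_vec_diff:
  fixes a b :: "'a::rc_field vec"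
  assumes "a \<in> carrier_vec n" "b \<in> carrier_vec n"
  shows "sq_norm_vec (a - b) = sq_norm_vec a + sq_norm_vec b - 2 * real_part (a \<bullet>c b)"
proof -
  have "sq_norm_vec (a - b) =
      (\<Sum>i<n. (norm (a $ i))^2 + (norm (b $ i))^2 - 2 * real_part (a $ i * conjugate (b $ i)))"
    unfolding sq_norm_vec_def using assms by (simp add: norm_diff_sq)
  also have "\<dots> = sq_norm_vec a + sq_norm_vec b - 2 * real_part (a \<bullet>c b)"
    unfolding sq_norm_vec_def scalar_prod_def using assms
    by (simp add: sum.distrib sum_subtractf sum_distrib_left real_part_sum atLeast0LessThan)
  finally show ?thesis .
qed

lemma real_part_cscalar_le:
  fixes a b :: "'a::rc_field vec"
  assumes "a \<in> carrier_vec n" "b \<in> carrier_vec n"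
  shows "2 * real_part (a \<bullet>c b) \<le> sq_norm_vec a + sq_norm_vec b"
  using sq_norm_vec_diff[OF assms] sq_norm_vec_nonneg[of "a - b"] by linarith

lemma cscalar_normalize:
  fixes v :: "'a::rc_field vec"
  assumes "v \<in> carrier_vec n" "v \<noteq> 0\<^sub>v n"
  defines "a \<equiv> 1 / sqrt (sq_norm_vec v)"
  shows "(of_real a \<cdot>\<^sub>v v) \<bullet>c (of_real a \<cdot>\<^sub>v v) = 1"
proof -
  have "(of_real a \<cdot>\<^sub>v v) \<bullet>c (of_real a \<cdot>\<^sub>v v) = of_real a * (of_real a * (v \<bullet>c v))"
    using assms(1) by (simp add: conjugate_smult_vec)
  also have "\<dots> = of_real (a * a * sq_norm_vec v)"
    unfolding cscalar_self by simp
  also have "a * a * sq_norm_vec v = 1"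
    unfolding a_def using sq_norm_vec_pos[OF assms(1,2)] by (simp add: real_sqrt_mult[symmetric])
  finally show ?thesis
    by simp
qed

section \<open>Eigenvectors of Hermitian matrices\<close>

lemma hermitian_eigenvalue_self_conjugate:
  fixes A :: "'a::rc_field mat"
  assumes A: "A \<in> carrier_mat n n" and herm: "mat_adjoint A = A"
    and v: "v \<in> carrier_vec n" "v \<noteq> 0\<^sub>v n" and ev: "A *\<^sub>v v = z \<cdot>\<^sub>v v"
  shows "conjugate z = z"
proof -
  have "z * (v \<bullet>c v) = (A *\<^sub>v v) \<bullet>c v"
    unfolding ev using v by simp
  also have "\<dots> = v \<bullet>c (A *\<^sub>v v)"
    using cscalar_mult_mat_vec[OF A v(1) v(1)] herm by simp
  also have "\<dots> = conjugate z * (v \<bullet>c v)"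
    unfolding ev using v by (simp add: conjugate_smult_vec)
  finally show ?thesis
    using cscalar_self_neq_0[OF v] by simp
qed

lemma hermitian_real_eigenvector:
  fixes H :: "'a::rc_field mat"
  assumes H: "H \<in> carrier_mat n n" and herm: "mat_adjoint H = H" and n: "n > 0"
  shows "\<exists>v c. v \<in> carrier_vec n \<and> v \<noteq> 0\<^sub>v n \<and> H *\<^sub>v v = of_real c \<cdot>\<^sub>v v"
proof -
  define Hc where "Hc = map_mat to_complex H"
  have Hc: "Hc \<in> carrier_mat n n"
    unfolding Hc_def using H by simp
  have herm_c: "mat_adjoint Hc = Hc"
  proof (rule eq_matI)
    fix i j
    assume "i < dim_row Hc" "j < dim_col Hc"
    then have ij: "i < n" "j < n"
      using Hc by auto
    have "mat_adjoint Hc $$ (i, j) = to_complex (mat_adjoint H $$ (i, j))"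
      using ij H unfolding Hc_def by (simp add: to_complex_conjugate)
    then show "mat_adjoint Hc $$ (i, j) = Hc $$ (i, j)"
      unfolding herm Hc_def using ij H by simp
  qed (use Hc in auto)
  obtain z where "z \<in> spectrum Hc"
    using spectrum_non_empty[OF Hc n] by blast
  then have "eigenvalue Hc z"
    unfolding spectrum_def by simp
  then obtain vc where "eigenvector Hc vc z"
    unfolding eigenvalue_def by blast
  then have "conjugate z = z"
    using hermitian_eigenvalue_self_conjugate[OF Hc herm_c] Hc unfolding eigenvector_def by auto
  then have z: "z = to_complex (of_real (real_part z) :: 'a)"
    using self_conjugate_eq_of_real[of z] by simp
  have "poly (char_poly Hc) z = 0"
    using \<open>eigenvalue Hc z\<close> eigenvalue_root_char_poly[OF Hc] by simp
  moreover have "char_poly Hc = map_poly to_complex (char_poly H)"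
    unfolding Hc_def by (rule to_complex.char_poly_hom[OF H])
  ultimately have "to_complex (poly (char_poly H) (of_real (real_part z))) = to_complex 0"
    using z by (metis to_complex.poly_map_poly to_complex.hom_zero)
  then have "eigenvalue H (of_real (real_part z))"
    using eigenvalue_root_char_poly[OF H] to_complex_inj by blast
  then show ?thesis
    unfolding eigenvalue_def eigenvector_def using H by auto
qed

section \<open>Matrices with orthonormal columns\<close>

lemma sum_lessThan_add: "(\<Sum>l<k + (m::nat). f l) = (\<Sum>l<k. f l) + (\<Sum>l<m. f (k + l))"
  by (induct m) (auto simp: algebra_simps)

definition orthonormal_mat :: "'a::conjugatable_field mat \<Rightarrow> nat \<Rightarrow> nat \<Rightarrow> bool" where
  "orthonormal_mat B n k \<longleftrightarrow> B \<in> carrier_mat n k \<and> orthonormal_cols B"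

lemma orthonormal_matD:
  assumes "orthonormal_mat B n k"
  shows "B \<in> carrier_mat n k" "mat_adjoint B * B = 1\<^sub>m k"
  using assms unfolding orthonormal_mat_def orthonormal_cols_def by auto

lemma orthonormal_matI:
  "B \<in> carrier_mat n k \<Longrightarrow> mat_adjoint B * B = 1\<^sub>m k \<Longrightarrow> orthonormal_mat B n k"
  unfolding orthonormal_mat_def orthonormal_cols_def by auto

lemma orthonormal_mat_iff_cols:
  fixes B :: "'a::conjugatable_field mat"
  assumes B: "B \<in> carrier_mat n k"
  shows "orthonormal_mat B n k \<longleftrightarrow>
    (\<forall>i<k. \<forall>j<k. col B j \<bullet>c col B i = (if i = j then 1 else 0))"
proof
  assume "orthonormal_mat B n k"
  then show "\<forall>i<k. \<forall>j<k. col B j \<bullet>c col B i = (if i = j then 1 else 0)"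
    using mat_adjoint_mult_index[OF B B] orthonormal_matD(2) by fastforce
next
  assume cols: "\<forall>i<k. \<forall>j<k. col B j \<bullet>c col B i = (if i = j then 1 else 0)"
  have "mat_adjoint B * B = 1\<^sub>m k"
  proof (rule eq_matI)
    fix i j
    assume "i < dim_row (1\<^sub>m k :: 'a mat)" "j < dim_col (1\<^sub>m k :: 'a mat)"
    then show "(mat_adjoint B * B) $$ (i, j) = 1\<^sub>m k $$ (i, j)"
      using mat_adjoint_mult_index[OF B B] cols by simp
  qed (use B in auto)
  then show "orthonormal_mat B n k"
    by (rule orthonormal_matI[OF B])
qed

lemma orthonormal_mat_col:
  assumes "orthonormal_mat B n k" "i < k" "j < k"
  shows "col B j \<bullet>c col B i = (if i = j then 1 else 0)"
  using assms orthonormal_mat_iff_cols orthonormal_matD(1) by metis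

lemma mat_adjoint_mult_eq_0_iff:
  fixes B :: "'a::conjugatable_field mat"
  assumes B: "B \<in> carrier_mat n k" and C: "C \<in> carrier_mat n m"
  shows "mat_adjoint B * C = 0\<^sub>m k m \<longleftrightarrow> (\<forall>i<k. \<forall>j<m. col C j \<bullet>c col B i = 0)"
proof
  assume "mat_adjoint B * C = 0\<^sub>m k m"
  then show "\<forall>i<k. \<forall>j<m. col C j \<bullet>c col B i = 0"
    using mat_adjoint_mult_index[OF B C] by (metis index_zero_mat(1))
next
  assume cols: "\<forall>i<k. \<forall>j<m. col C j \<bullet>c col B i = 0"
  show "mat_adjoint B * C = 0\<^sub>m k m"
  proof (rule eq_matI)
    fix i j
    assume "i < dim_row (0\<^sub>m k m :: 'a mat)" "j < dim_col (0\<^sub>m k m :: 'a mat)"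
    then show "(mat_adjoint B * C) $$ (i, j) = 0\<^sub>m k m $$ (i, j)"
      using mat_adjoint_mult_index[OF B C] cols by simp
  qed (use B C in auto)
qed

lemma orthonormal_mat_empty: "orthonormal_mat (0\<^sub>m n 0 :: 'a::conjugatable_field mat) n 0"
  by (rule orthonormal_matI) (auto intro!: eq_matI)

lemma mult_mat_vec_in_mat_range:
  "B \<in> carrier_mat n k \<Longrightarrow> x \<in> carrier_vec k \<Longrightarrow> B *\<^sub>v x \<in> mat_range B"
  unfolding mat_range_def by auto

lemma orthonormal_mat_mult:
  fixes A C :: "'a::conjugatable_field mat"
  assumes A: "orthonormal_mat A n k" and C: "orthonormal_mat C k m"
  shows "orthonormal_mat (A * C) n m"
proof (rule orthonormal_matI)
  have Ac: "A \<in> carrier_mat n k" and Cc: "C \<in> carrier_mat k m"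
    using A C orthonormal_matD by auto
  then show "A * C \<in> carrier_mat n m"
    by simp
  have "mat_adjoint (A * C) * (A * C) = mat_adjoint C * (mat_adjoint A * (A * C))"
    unfolding mat_adjoint_mult[OF Ac Cc]
    by (rule assoc_mult_mat[OF mat_adjoint_carrier[OF Cc] mat_adjoint_carrier[OF Ac]
          mult_carrier_mat[OF Ac Cc]])
  also have "mat_adjoint A * (A * C) = (mat_adjoint A * A) * C"
    using Ac Cc by (simp add: assoc_mult_mat[of _ k n _ k])
  also have "mat_adjoint C * (\<dots>) = 1\<^sub>m m"
    using Cc orthonormal_matD(2)[OF A] orthonormal_matD(2)[OF C] by simp
  finally show "mat_adjoint (A * C) * (A * C) = 1\<^sub>m m" .
qed

lemma unitary_mult_adjoint:
  fixes U :: "'a::conjugatable_field mat"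
  assumes "orthonormal_mat U n n"
  shows "U * mat_adjoint U = 1\<^sub>m n"
  using orthonormal_matD[OF assms]
  by (intro mat_mult_left_right_inverse[of "mat_adjoint U"]) auto

lemma unitary_adjoint:
  fixes U :: "'a::conjugatable_field mat"
  assumes "orthonormal_mat U n n"
  shows "orthonormal_mat (mat_adjoint U) n n"
  using unitary_mult_adjoint[OF assms] orthonormal_matD(1)[OF assms] by (simp add: orthonormal_matI)

lemma orthonormal_mat_sq_norm:
  fixes U :: "'a::rc_field mat"
  assumes U: "orthonormal_mat U n k" and x: "x \<in> carrier_vec k"
  shows "sq_norm_vec (U *\<^sub>v x) = sq_norm_vec x"
proof -
  have Uc: "U \<in> carrier_mat n k"
    using orthonormal_matD(1)[OF U] .
  have "(U *\<^sub>v x) \<bullet>c (U *\<^sub>v x) = x \<bullet>c (mat_adjoint U *\<^sub>v (U *\<^sub>v x))"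
    using cscalar_mult_mat_vec[OF Uc x, of "U *\<^sub>v x"] Uc x by simp
  also have "mat_adjoint U *\<^sub>v (U *\<^sub>v x) = (mat_adjoint U * U) *\<^sub>v x"
    using Uc x by (simp add: assoc_mult_mat_vec[of _ k n _ k])
  finally have "(U *\<^sub>v x) \<bullet>c (U *\<^sub>v x) = x \<bullet>c x"
    using x unfolding orthonormal_matD(2)[OF U] by simp
  then show ?thesis
    unfolding cscalar_self by simp
qed

lemma orthonormal_mat_range_eq:
  fixes V :: "'a::conjugatable_field mat"
  assumes V: "orthonormal_mat V n r" and v: "v \<in> mat_range V"
  shows "V *\<^sub>v (mat_adjoint V *\<^sub>v v) = v"
proof -
  have Vc: "V \<in> carrier_mat n r"
    using orthonormal_matD(1)[OF V] .
  obtain z where z: "z \<in> carrier_vec r" "v = V *\<^sub>v z"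
    using v Vc unfolding mat_range_def by auto
  have "mat_adjoint V *\<^sub>v v = (mat_adjoint V * V) *\<^sub>v z"
    unfolding z(2) using Vc z by (simp add: assoc_mult_mat_vec[of _ r n _ r])
  also have "\<dots> = z"
    unfolding orthonormal_matD(2)[OF V] using z by simp
  finally show ?thesis
    using z by simp
qed

text \<open>Pythagoras: \<open>z - V V\<^sup>H z\<close> is orthogonal to \<open>V V\<^sup>H z\<close>.\<close>

lemma sq_norm_mat_adjoint_le:
  fixes V :: "'a::rc_field mat"
  assumes V: "orthonormal_mat V n r" and z: "z \<in> carrier_vec n"
  shows "sq_norm_vec (mat_adjoint V *\<^sub>v z) \<le> sq_norm_vec z"
proof -
  have Vc: "V \<in> carrier_mat n r"
    using orthonormal_matD(1)[OF V] .
  define y where "y = mat_adjoint V *\<^sub>v z"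
  have yc: "y \<in> carrier_vec r"
    unfolding y_def using mult_mat_vec_carrier[OF mat_adjoint_carrier[OF Vc] z] .
  have pc: "V *\<^sub>v y \<in> carrier_vec n"
    using Vc yc by simp
  have "(V *\<^sub>v y) \<bullet>c z = y \<bullet>c y"
    using cscalar_mult_mat_vec[OF Vc yc z] unfolding y_def by simp
  then have "z \<bullet>c (V *\<^sub>v y) = of_real (sq_norm_vec y)"
    using cscalar_commute[OF pc z] unfolding cscalar_self by simp
  then have "sq_norm_vec (z - V *\<^sub>v y) = sq_norm_vec z - sq_norm_vec y"
    using sq_norm_vec_diff[OF z pc] orthonormal_mat_sq_norm[OF V yc] by simp
  then show ?thesis
    using sq_norm_vec_nonneg[of "z - V *\<^sub>v y"] unfolding y_def by simp
qed

definition append_cols :: "'a mat \<Rightarrow> 'a mat \<Rightarrow> 'a mat" where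
  "append_cols B C = mat (dim_row B) (dim_col B + dim_col C)
     (\<lambda>(i, j). if j < dim_col B then B $$ (i, j) else C $$ (i, j - dim_col B))"

lemma append_cols_dim [simp]:
  "dim_row (append_cols B C) = dim_row B" "dim_col (append_cols B C) = dim_col B + dim_col C"
  unfolding append_cols_def by simp_all

lemma append_cols_carrier [simp]:
  "B \<in> carrier_mat n k \<Longrightarrow> C \<in> carrier_mat n m \<Longrightarrow> append_cols B C \<in> carrier_mat n (k + m)"
  unfolding append_cols_def by auto

lemma col_append_cols:
  assumes "B \<in> carrier_mat n k" "C \<in> carrier_mat n m" "j < k + m"
  shows "col (append_cols B C) j = (if j < k then col B j else col C (j - k))"
  using assms unfolding append_cols_def by (intro eq_vecI) auto

lemma col_append_cols_unit:
  assumes "B \<in> carrier_mat n k" "u \<in> carrier_vec n" "j < Suc k"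
  shows "col (append_cols B (mat_of_cols n [u])) j = (if j < k then col B j else u)"
proof -
  have u: "mat_of_cols n [u] \<in> carrier_mat n 1"
    using mat_of_cols_carrier(1)[of n "[u]"] by simp
  show ?thesis
    using col_append_cols[OF assms(1) u, of j] assms(2,3) by auto
qed

lemma orthonormal_mat_append_cols:
  fixes B :: "'a::rc_field mat"
  assumes B: "orthonormal_mat B n k" and C: "orthonormal_mat C n m"
    and BC: "mat_adjoint B * C = 0\<^sub>m k m"
  shows "orthonormal_mat (append_cols B C) n (k + m)"
proof -
  have Bc: "B \<in> carrier_mat n k" and Cc: "C \<in> carrier_mat n m"
    using B C orthonormal_matD by auto
  have CB: "col C j \<bullet>c col B i = 0" if "i < k" "j < m" for i j
    using BC mat_adjoint_mult_eq_0_iff[OF Bc Cc] that by auto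
  have BC': "col B i \<bullet>c col C j = 0" if "i < k" "j < m" for i j
    using CB[OF that] cscalar_commute[of "col C j" n "col B i"] Bc Cc that by simp
  show ?thesis
    unfolding orthonormal_mat_iff_cols[OF append_cols_carrier[OF Bc Cc]]
  proof (intro allI impI)
    fix i j
    assume i: "i < k + m" and j: "j < k + m"
    show "col (append_cols B C) j \<bullet>c col (append_cols B C) i = (if i = j then 1 else 0)"
      unfolding col_append_cols[OF Bc Cc i] col_append_cols[OF Bc Cc j]
      using orthonormal_mat_col[OF B, of i j] orthonormal_mat_col[OF C, of "i - k" "j - k"]
        CB[of i "j - k"] BC'[of j "i - k"] i j by auto
  qed
qed

lemma orthonormal_mat_append_unit:
  fixes B :: "'a::rc_field mat"
  assumes B: "orthonormal_mat B n k" and u: "u \<in> carrier_vec n" "u \<bullet>c u = 1"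
    and orth: "\<And>i. i < k \<Longrightarrow> u \<bullet>c col B i = 0"
  shows "orthonormal_mat (append_cols B (mat_of_cols n [u])) n (Suc k)"
proof -
  have Bc: "B \<in> carrier_mat n k"
    using orthonormal_matD(1)[OF B] .
  have "orthonormal_mat (mat_of_cols n [u]) n 1"
    by (subst orthonormal_mat_iff_cols) (use u in auto)
  moreover have "mat_adjoint B * mat_of_cols n [u] = 0\<^sub>m k 1"
    by (subst mat_adjoint_mult_eq_0_iff[OF Bc]) (use orth u in auto)
  ultimately have "orthonormal_mat (append_cols B (mat_of_cols n [u])) n (k + 1)"
    by (rule orthonormal_mat_append_cols[OF B])
  then show ?thesis
    by simp
qed

lemma append_cols_mult_adjoint:
  fixes B :: "'a::conjugatable_field mat"
  assumes B: "B \<in> carrier_mat n k" and C: "C \<in> carrier_mat n m"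
  shows "append_cols B C * mat_adjoint (append_cols B C) = B * mat_adjoint B + C * mat_adjoint C"
proof (rule eq_matI)
  fix i j
  assume "i < dim_row (B * mat_adjoint B + C * mat_adjoint C)"
    "j < dim_col (B * mat_adjoint B + C * mat_adjoint C)"
  then have i: "i < n" and j: "j < n"
    using B C by auto
  let ?D = "append_cols B C"
  have "(?D * mat_adjoint ?D) $$ (i, j) = (\<Sum>l<k + m. ?D $$ (i, l) * conjugate (?D $$ (j, l)))"
    using B C i j by (simp add: scalar_prod_def atLeast0LessThan)
  also have "\<dots> = (\<Sum>l<k. B $$ (i, l) * conjugate (B $$ (j, l))) +
      (\<Sum>l<m. C $$ (i, l) * conjugate (C $$ (j, l)))"
    unfolding sum_lessThan_add using B C i j unfolding append_cols_def by simp
  also have "\<dots> = (B * mat_adjoint B + C * mat_adjoint C) $$ (i, j)"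
    using B C i j by (simp add: scalar_prod_def row_def col_def atLeast0LessThan)
  finally show "(?D * mat_adjoint ?D) $$ (i, j) = (B * mat_adjoint B + C * mat_adjoint C) $$ (i, j)" .
qed (use B C in auto)

section \<open>Orthonormal completion\<close>

lemma exists_unit_orthogonal:
  fixes vs :: "'a::rc_field vec list"
  assumes vs: "set vs \<subseteq> carrier_vec n" and len: "length vs < n"
  shows "\<exists>u\<in>carrier_vec n. u \<bullet>c u = 1 \<and> (\<forall>v\<in>set vs. u \<bullet>c v = 0)"
proof -
  define c where "c = (\<lambda>i. if i < length vs then conjugate (vs ! i) else 0\<^sub>v n)"
  define A where "A = mat\<^sub>r n n (\<lambda>i. if i = n - 1 then 0\<^sub>v n else c i)"
  have vs_i: "vs ! i \<in> carrier_vec n" if "i < length vs" for i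
    using vs that by auto
  then have c: "c \<in> {0..<n} \<rightarrow> carrier_vec n"
    unfolding c_def by auto
  have "det A = 0"
    unfolding A_def by (rule det_row_0[OF _ c]) (use len in simp)
  moreover have A: "A \<in> carrier_mat n n"
    unfolding A_def by simp
  ultimately obtain v where v: "v \<in> carrier_vec n" "v \<noteq> 0\<^sub>v n" "A *\<^sub>v v = 0\<^sub>v n"
    using det_0_iff_vec_prod_zero_field[OF A] by auto
  have v_orth: "v \<bullet>c vs ! i = 0" if i: "i < length vs" for i
  proof -
    have i': "i < n" "i \<noteq> n - 1"
      using i len by auto
    have "(A *\<^sub>v v) $ i = row A i \<bullet> v"
      using i' A by simp
    also have "row A i = conjugate (vs ! i)"
      unfolding A_def using i' i vs_i[OF i] by (simp add: c_def)
    finally have "conjugate (vs ! i) \<bullet> v = 0"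
      using v(3) i' by simp
    then show ?thesis
      using comm_scalar_prod[of v n "conjugate (vs ! i)"] v(1) vs_i[OF i] by simp
  qed
  define u where "u = (of_real (1 / sqrt (sq_norm_vec v)) :: 'a) \<cdot>\<^sub>v v"
  have "u \<in> carrier_vec n"
    unfolding u_def using v by simp
  moreover have "u \<bullet>c u = 1"
    unfolding u_def by (rule cscalar_normalize[OF v(1,2)])
  moreover have "u \<bullet>c w = 0" if w: "w \<in> set vs" for w
  proof -
    obtain i where i: "i < length vs" "w = vs ! i"
      using w unfolding in_set_conv_nth by blast
    then show ?thesis
      unfolding u_def using v_orth[OF i(1)] v(1) vs_i[OF i(1)] by simp
  qed
  ultimately show ?thesis
    by blast
qed

lemma exists_orthonormal_complement:
  fixes B :: "'a::rc_field mat"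
  assumes B: "orthonormal_mat B n k"
  shows "k + m \<le> n \<Longrightarrow> \<exists>C. orthonormal_mat C n m \<and> mat_adjoint B * C = 0\<^sub>m k m"
proof (induct m)
  case 0
  have "mat_adjoint B * 0\<^sub>m n 0 = 0\<^sub>m k 0"
    using orthonormal_matD(1)[OF B] by (intro eq_matI) auto
  then show ?case
    using orthonormal_mat_empty by blast
next
  case (Suc m)
  then obtain C where C: "orthonormal_mat C n m" and BC: "mat_adjoint B * C = 0\<^sub>m k m"
    by auto
  have Bc: "B \<in> carrier_mat n k" and Cc: "C \<in> carrier_mat n m"
    using B C orthonormal_matD by auto
  have "set (cols B @ cols C) \<subseteq> carrier_vec n"
    using cols_dim[of B] cols_dim[of C] Bc Cc by auto
  then obtain u where u: "u \<in> carrier_vec n" "u \<bullet>c u = 1"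
    and u_orth: "\<forall>v\<in>set (cols B @ cols C). u \<bullet>c v = 0"
    using exists_unit_orthogonal[of "cols B @ cols C" n] Bc Cc Suc(2) by auto
  have col_in_cols: "col A i \<in> set (cols A)" if "i < dim_col A" for A :: "'a mat" and i
    using that by (metis cols_length cols_nth nth_mem)
  define C' where "C' = append_cols C (mat_of_cols n [u])"
  have "mat_of_cols n [u] \<in> carrier_mat n 1"
    using mat_of_cols_carrier(1)[of n "[u]"] by simp
  then have C'c: "C' \<in> carrier_mat n (Suc m)"
    unfolding C'_def using append_cols_carrier[OF Cc, of _ 1] by simp
  have "orthonormal_mat C' n (Suc m)"
    unfolding C'_def using Cc u_orth col_in_cols by (intro orthonormal_mat_append_unit[OF C u]) auto
  moreover have "col C' j \<bullet>c col B i = 0" if i: "i < k" and j: "j < Suc m" for i j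
  proof (cases "j < m")
    case True
    then show ?thesis
      unfolding C'_def col_append_cols_unit[OF Cc u(1) j]
      using BC mat_adjoint_mult_eq_0_iff[OF Bc Cc] i by auto
  next
    case False
    then show ?thesis
      unfolding C'_def col_append_cols_unit[OF Cc u(1) j]
      using u_orth col_in_cols[of i B] i Bc by auto
  qed
  then have "mat_adjoint B * C' = 0\<^sub>m k (Suc m)"
    using mat_adjoint_mult_eq_0_iff[OF Bc C'c] by simp
  ultimately show ?case
    by auto
qed

section \<open>The spectral theorem for Hermitian matrices\<close>

lemma orthonormal_complement_sum:
  fixes B :: "'a::rc_field mat"
  assumes B: "orthonormal_mat B n k" and C: "orthonormal_mat C n (n - k)"
    and BC: "mat_adjoint B * C = 0\<^sub>m k (n - k)" and k: "k \<le> n"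
  shows "B * mat_adjoint B + C * mat_adjoint C = 1\<^sub>m n"
proof -
  have "orthonormal_mat (append_cols B C) n n"
    using orthonormal_mat_append_cols[OF B C BC] k by simp
  then have "append_cols B C * mat_adjoint (append_cols B C) = 1\<^sub>m n"
    by (rule unitary_mult_adjoint)
  then show ?thesis
    using append_cols_mult_adjoint orthonormal_matD(1)[OF B] orthonormal_matD(1)[OF C] by metis
qed

lemma hermitian_compression:
  fixes H :: "'a::conjugatable_field mat"
  assumes H: "H \<in> carrier_mat n n" and herm: "mat_adjoint H = H" and C: "C \<in> carrier_mat n m"
  shows "mat_adjoint (mat_adjoint C * H * C) = mat_adjoint C * H * C"
proof -
  have CH: "mat_adjoint C * H \<in> carrier_mat m n"
    using C H by (metis mat_adjoint_carrier mult_carrier_mat)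
  have "mat_adjoint (mat_adjoint C * H * C) = mat_adjoint C * mat_adjoint (mat_adjoint C * H)"
    by (rule mat_adjoint_mult[OF CH C])
  also have "mat_adjoint (mat_adjoint C * H) = H * C"
    using mat_adjoint_mult[OF mat_adjoint_carrier[OF C] H] herm by simp
  also have "mat_adjoint C * (H * C) = mat_adjoint C * H * C"
    using C H by (simp add: assoc_mult_mat[of _ m n _ n _ m])
  finally show ?thesis .
qed

lemma hermitian_preserves_orthogonality:
  fixes H :: "'a::rc_field mat"
  assumes H: "H \<in> carrier_mat n n" and herm: "mat_adjoint H = H" and B: "B \<in> carrier_mat n k"
    and eigen: "\<And>j. j < k \<Longrightarrow> H *\<^sub>v col B j = of_real (d j) \<cdot>\<^sub>v col B j"
    and x: "x \<in> carrier_vec n" and orth: "mat_adjoint B *\<^sub>v x = 0\<^sub>v k"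
  shows "mat_adjoint B *\<^sub>v (H *\<^sub>v x) = 0\<^sub>v k"
proof (rule eq_vecI)
  fix i
  assume "i < dim_vec (0\<^sub>v k :: 'a vec)"
  then have i: "i < k"
    by simp
  have Bi: "col B i \<in> carrier_vec n"
    using B i by simp
  have "(mat_adjoint B *\<^sub>v (H *\<^sub>v x)) $ i = x \<bullet>c (H *\<^sub>v col B i)"
    using mat_adjoint_mult_vec_index[OF B _ i] cscalar_mult_mat_vec[OF H x Bi] herm H x by simp
  also have "\<dots> = of_real (d i) * (x \<bullet>c col B i)"
    using eigen[OF i] x Bi by (simp add: conjugate_smult_vec)
  also have "x \<bullet>c col B i = 0"
    using mat_adjoint_mult_vec_index[OF B x i] orth i by simp
  finally show "(mat_adjoint B *\<^sub>v (H *\<^sub>v x)) $ i = 0\<^sub>v k $ i"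
    using i by simp
qed (use B in simp)

lemma orthonormal_complement_decomposition:
  fixes B :: "'a::rc_field mat"
  assumes B: "orthonormal_mat B n k" and C: "orthonormal_mat C n (n - k)"
    and BC: "mat_adjoint B * C = 0\<^sub>m k (n - k)" and k: "k \<le> n" and v: "v \<in> carrier_vec n"
  shows "v = B *\<^sub>v (mat_adjoint B *\<^sub>v v) + C *\<^sub>v (mat_adjoint C *\<^sub>v v)"
proof -
  have Bc: "B \<in> carrier_mat n k" and Cc: "C \<in> carrier_mat n (n - k)"
    using B C orthonormal_matD by auto
  have "v = (B * mat_adjoint B + C * mat_adjoint C) *\<^sub>v v"
    unfolding orthonormal_complement_sum[OF B C BC k] using v by simp
  also have "\<dots> = (B * mat_adjoint B) *\<^sub>v v + (C * mat_adjoint C) *\<^sub>v v"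
    using Bc Cc by (intro add_mult_distrib_mat_vec[OF _ _ v]) auto
  also have "\<dots> = B *\<^sub>v (mat_adjoint B *\<^sub>v v) + C *\<^sub>v (mat_adjoint C *\<^sub>v v)"
    using assoc_mult_mat_vec[OF Bc mat_adjoint_carrier[OF Bc] v]
      assoc_mult_mat_vec[OF Cc mat_adjoint_carrier[OF Cc] v] by simp
  finally show ?thesis .
qed

lemma hermitian_unit_eigenvector:
  fixes H :: "'a::rc_field mat"
  assumes H: "H \<in> carrier_mat n n" and herm: "mat_adjoint H = H" and n: "n > 0"
  shows "\<exists>v c. v \<in> carrier_vec n \<and> v \<bullet>c v = 1 \<and> H *\<^sub>v v = of_real c \<cdot>\<^sub>v v"
proof -
  obtain v c where v: "v \<in> carrier_vec n" "v \<noteq> 0\<^sub>v n" and Hv: "H *\<^sub>v v = of_real c \<cdot>\<^sub>v v"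
    using hermitian_real_eigenvector[OF H herm n] by blast
  define a :: 'a where "a = of_real (1 / sqrt (sq_norm_vec v))"
  have "(a \<cdot>\<^sub>v v) \<bullet>c (a \<cdot>\<^sub>v v) = 1"
    unfolding a_def by (rule cscalar_normalize[OF v])
  moreover have "H *\<^sub>v (a \<cdot>\<^sub>v v) = of_real c \<cdot>\<^sub>v (a \<cdot>\<^sub>v v)"
    using mult_mat_vec[OF H v(1)] Hv by (simp add: smult_smult_assoc mult.commute)
  moreover have "a \<cdot>\<^sub>v v \<in> carrier_vec n"
    using v(1) by simp
  ultimately show ?thesis
    by blast
qed

text \<open>An eigenvector of the compression of \<open>H\<close> to the orthogonal complement \<open>C\<close> of the known
  eigenvectors is mapped by \<open>C\<close> to a new eigenvector of \<open>H\<close>.\<close>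

lemma exists_orthogonal_eigenvector:
  fixes H :: "'a::rc_field mat"
  assumes H: "H \<in> carrier_mat n n" and herm: "mat_adjoint H = H"
    and B: "orthonormal_mat B n k" and k: "k < n"
    and eigen: "\<And>j. j < k \<Longrightarrow> H *\<^sub>v col B j = of_real (d j) \<cdot>\<^sub>v col B j"
  shows "\<exists>x c. x \<in> carrier_vec n \<and> x \<bullet>c x = 1 \<and> mat_adjoint B *\<^sub>v x = 0\<^sub>v k \<and>
    H *\<^sub>v x = of_real c \<cdot>\<^sub>v x"
proof -
  obtain C where C: "orthonormal_mat C n (n - k)" and BC: "mat_adjoint B * C = 0\<^sub>m k (n - k)"
    using exists_orthonormal_complement[OF B, of "n - k"] k by auto
  have Bc: "B \<in> carrier_mat n k" and Cc: "C \<in> carrier_mat n (n - k)"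
    using B C orthonormal_matD by auto
  define H' where "H' = mat_adjoint C * H * C"
  have H': "H' \<in> carrier_mat (n - k) (n - k)"
    unfolding H'_def using Cc H by (metis mat_adjoint_carrier mult_carrier_mat)
  obtain y c where y: "y \<in> carrier_vec (n - k)" "y \<bullet>c y = 1" and Hy: "H' *\<^sub>v y = of_real c \<cdot>\<^sub>v y"
    using hermitian_unit_eigenvector[OF H' hermitian_compression[OF H herm Cc, folded H'_def]] k
    by auto
  define x where "x = C *\<^sub>v y"
  have x: "x \<in> carrier_vec n" and Hx: "H *\<^sub>v x \<in> carrier_vec n"
    unfolding x_def using Cc H y(1) by simp_all
  have x1: "x \<bullet>c x = 1"
    using orthonormal_mat_sq_norm[OF C y(1)] y(2) unfolding x_def cscalar_self by simp
  have "mat_adjoint B *\<^sub>v x = (mat_adjoint B * C) *\<^sub>v y"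
    unfolding x_def by (rule assoc_mult_mat_vec[symmetric, OF mat_adjoint_carrier[OF Bc] Cc y(1)])
  then have Bx: "mat_adjoint B *\<^sub>v x = 0\<^sub>v k"
    unfolding BC using mult_zero_mat_vec[OF y(1)] by simp
  have CH: "mat_adjoint C * H \<in> carrier_mat (n - k) n"
    using Cc H by (metis mat_adjoint_carrier mult_carrier_mat)
  have "mat_adjoint C *\<^sub>v (H *\<^sub>v x) = H' *\<^sub>v y"
    unfolding H'_def x_def using assoc_mult_mat_vec[OF CH Cc y(1)]
      assoc_mult_mat_vec[OF mat_adjoint_carrier[OF Cc] H mult_mat_vec_carrier[OF Cc y(1)]] by simp
  then have "H *\<^sub>v x = 0\<^sub>v n + C *\<^sub>v (of_real c \<cdot>\<^sub>v y)"
    using orthonormal_complement_decomposition[OF B C BC less_imp_le[OF k] Hx] Hy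
      hermitian_preserves_orthogonality[OF H herm Bc eigen x Bx] mult_mat_vec_zero[OF Bc] by simp
  also have "\<dots> = of_real c \<cdot>\<^sub>v x"
    unfolding x_def using Cc y(1) by (simp add: mult_mat_vec)
  finally show ?thesis
    using x x1 Bx by blast
qed

theorem spectral_theorem:
  fixes H :: "'a::rc_field mat"
  assumes H: "H \<in> carrier_mat n n" and herm: "mat_adjoint H = H"
  shows "\<exists>U d. orthonormal_mat U n n \<and> (\<forall>j<n. H *\<^sub>v col U j = of_real (d j) \<cdot>\<^sub>v col U j)"
proof -
  have "\<exists>B d. orthonormal_mat B n k \<and> (\<forall>j<k. H *\<^sub>v col B j = of_real (d j) \<cdot>\<^sub>v col B j)"
    if "k \<le> n" for k
    using that
  proof (induct k)
    case 0
    then show ?case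
      using orthonormal_mat_empty by blast
  next
    case (Suc k)
    then obtain B d where B: "orthonormal_mat B n k"
      and eigen: "\<forall>j<k. H *\<^sub>v col B j = of_real (d j) \<cdot>\<^sub>v col B j"
      by auto
    have Bc: "B \<in> carrier_mat n k"
      using orthonormal_matD(1)[OF B] .
    obtain x c where x: "x \<in> carrier_vec n" "x \<bullet>c x = 1" and Bx: "mat_adjoint B *\<^sub>v x = 0\<^sub>v k"
      and Hx: "H *\<^sub>v x = of_real c \<cdot>\<^sub>v x"
      using exists_orthogonal_eigenvector[OF H herm B _ spec[OF eigen, THEN mp]] Suc(2) by auto
    have "x \<bullet>c col B i = 0" if "i < k" for i
      using mat_adjoint_mult_vec_index[OF Bc x(1) that] Bx that by simp
    then have "orthonormal_mat (append_cols B (mat_of_cols n [x])) n (Suc k)"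
      by (rule orthonormal_mat_append_unit[OF B x])
    moreover have "\<forall>j<Suc k. H *\<^sub>v col (append_cols B (mat_of_cols n [x])) j =
        of_real ((d(k := c)) j) \<cdot>\<^sub>v col (append_cols B (mat_of_cols n [x])) j"
      using col_append_cols_unit[OF Bc x(1)] eigen Hx by (simp add: less_Suc_eq)
    ultimately show ?case
      by blast
  qed
  then show ?thesis
    by blast
qed

section \<open>Orthogonal Procrustes\<close>

definition mat_trace :: "'a::comm_ring mat \<Rightarrow> 'a" where
  "mat_trace A = (\<Sum>i<dim_row A. A $$ (i, i))"

lemma mat_trace_unitary:
  fixes U M :: "'a::conjugatable_field mat"
  assumes U: "orthonormal_mat U r r" and M: "M \<in> carrier_mat r r"
  shows "mat_trace M = (\<Sum>m<r. (M *\<^sub>v col U m) \<bullet>c col U m)"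
proof -
  have Uc: "U \<in> carrier_mat r r"
    using orthonormal_matD(1)[OF U] .
  have UU: "(\<Sum>m<r. U $$ (j, m) * conjugate (U $$ (i, m))) = (if j = i then 1 else 0)"
    if "j < r" "i < r" for i j
  proof -
    have "(U * mat_adjoint U) $$ (j, i) = (\<Sum>m<r. U $$ (j, m) * conjugate (U $$ (i, m)))"
      using Uc that by (simp add: scalar_prod_def atLeast0LessThan)
    then show ?thesis
      unfolding unitary_mult_adjoint[OF U] using that by simp
  qed
  have "(\<Sum>m<r. (M *\<^sub>v col U m) \<bullet>c col U m) =
      (\<Sum>m<r. \<Sum>i<r. (\<Sum>j<r. M $$ (i, j) * U $$ (j, m)) * conjugate (U $$ (i, m)))"
    using M Uc by (intro sum.cong refl) (simp add: scalar_prod_def atLeast0LessThan)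
  also have "\<dots> = (\<Sum>i<r. \<Sum>j<r. M $$ (i, j) * (\<Sum>m<r. U $$ (j, m) * conjugate (U $$ (i, m))))"
    by (subst sum.swap) (simp add: sum_distrib_left sum_distrib_right mult_ac, subst sum.swap, rule refl)
  also have "\<dots> = (\<Sum>i<r. \<Sum>j<r. if j = i then M $$ (i, i) else 0)"
    by (intro sum.cong refl) (simp add: UU)
  also have "\<dots> = mat_trace M"
    unfolding mat_trace_def using M by simp
  finally show ?thesis ..
qed

lemma sum_cscalar_eq_mat_trace:
  fixes X :: "'a::conjugatable_field mat" and x y :: "'p \<Rightarrow> 'a vec"
  assumes X: "X \<in> carrier_mat r r"
    and xy: "\<And>p. p \<in> P \<Longrightarrow> x p \<in> carrier_vec r \<and> y p \<in> carrier_vec r"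
  shows "(\<Sum>p\<in>P. (X *\<^sub>v y p) \<bullet>c x p) =
    mat_trace (X * mat r r (\<lambda>(k, i). \<Sum>p\<in>P. y p $ k * conjugate (x p $ i)))"
proof -
  have "(\<Sum>p\<in>P. (X *\<^sub>v y p) \<bullet>c x p) =
      (\<Sum>p\<in>P. \<Sum>i<r. (\<Sum>k<r. X $$ (i, k) * y p $ k) * conjugate (x p $ i))"
  proof (intro sum.cong refl)
    fix p
    assume "p \<in> P"
    then have "dim_vec (x p) = r" "dim_vec (y p) = r"
      using xy by auto
    then show "(X *\<^sub>v y p) \<bullet>c x p = (\<Sum>i<r. (\<Sum>k<r. X $$ (i, k) * y p $ k) * conjugate (x p $ i))"
      using X by (simp add: scalar_prod_def atLeast0LessThan)
  qed
  also have "\<dots> = (\<Sum>i<r. \<Sum>k<r. X $$ (i, k) * (\<Sum>p\<in>P. y p $ k * conjugate (x p $ i)))"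
    by (subst sum.swap) (simp add: sum_distrib_left sum_distrib_right mult_ac, subst sum.swap, rule refl)
  also have "\<dots> = mat_trace (X * mat r r (\<lambda>(k, i). \<Sum>p\<in>P. y p $ k * conjugate (x p $ i)))"
    unfolding mat_trace_def using X by (intro sum.cong refl) (simp_all add: scalar_prod_def atLeast0LessThan)
  finally show ?thesis .
qed

lemma exists_unit_normalizing:
  fixes c :: "nat \<Rightarrow> 'a::rc_field vec"
  assumes cc: "\<And>m. m < r \<Longrightarrow> c m \<in> carrier_vec n"
    and orth: "\<And>i j. i < r \<Longrightarrow> j < r \<Longrightarrow> i \<noteq> j \<Longrightarrow> c j \<bullet>c c i = 0"
    and rn: "r \<le> n" and k: "k < r"
    and Q: "orthonormal_mat Q n k" and Qo: "\<forall>m<k. \<forall>l. k \<le> l \<and> l < r \<longrightarrow> c l \<bullet>c col Q m = 0"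
  shows "\<exists>u\<in>carrier_vec n. u \<bullet>c u = 1 \<and> (\<forall>m<k. u \<bullet>c col Q m = 0) \<and>
    (\<forall>l. k < l \<and> l < r \<longrightarrow> c l \<bullet>c u = 0) \<and> of_real (sqrt (sq_norm_vec (c k))) \<cdot>\<^sub>v u = c k"
proof (cases "c k = 0\<^sub>v n")
  case True
  have Qc: "Q \<in> carrier_mat n k"
    using orthonormal_matD(1)[OF Q] .
  let ?vs = "cols Q @ map c [Suc k..<r]"
  have "set ?vs \<subseteq> carrier_vec n"
    using cols_dim[of Q] Qc cc by auto
  moreover have "length ?vs < n"
    using Qc k rn by simp
  ultimately obtain u where u: "u \<in> carrier_vec n" "u \<bullet>c u = 1" and u_orth: "\<forall>v\<in>set ?vs. u \<bullet>c v = 0"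
    using exists_unit_orthogonal by blast
  have "u \<bullet>c col Q m = 0" if "m < k" for m
  proof -
    have "col Q m \<in> set (cols Q)"
      using Qc that by (metis cols_length cols_nth nth_mem carrier_matD(2))
    then show ?thesis
      using u_orth by simp
  qed
  moreover have "c l \<bullet>c u = 0" if "k < l" "l < r" for l
    using u_orth that cscalar_commute[OF cc[of l] u(1)] by auto
  moreover have "of_real (sqrt (sq_norm_vec (c k))) \<cdot>\<^sub>v u = c k"
    using True u(1) by (intro eq_vecI) (auto simp: sq_norm_vec_def)
  ultimately show ?thesis
    using u by blast
next
  case False
  have ck: "c k \<in> carrier_vec n"
    using cc k by simp
  define a where "a = 1 / sqrt (sq_norm_vec (c k))"
  define u where "u = (of_real a :: 'a) \<cdot>\<^sub>v c k"
  have "u \<in> carrier_vec n"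
    unfolding u_def using ck by simp
  moreover have "u \<bullet>c u = 1"
    unfolding u_def a_def by (rule cscalar_normalize[OF ck False])
  moreover have "u \<bullet>c col Q m = 0" if "m < k" for m
  proof -
    have "c k \<bullet>c col Q m = 0"
      using Qo that k by blast
    then show ?thesis
      unfolding u_def using ck orthonormal_matD(1)[OF Q] that by simp
  qed
  moreover have "c l \<bullet>c u = 0" if "k < l" "l < r" for l
    unfolding u_def using orth[of k l] cc[of l] ck that by (simp add: conjugate_smult_vec)
  moreover have "of_real (sqrt (sq_norm_vec (c k))) \<cdot>\<^sub>v u = c k"
  proof -
    have "(of_real (sqrt (sq_norm_vec (c k))) * of_real a :: 'a) = 1"
      unfolding a_def using sq_norm_vec_pos[OF ck False] by (simp flip: of_real_mult)
    then show ?thesis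
      unfolding u_def by (simp add: smult_smult_assoc)
  qed
  ultimately show ?thesis
    by blast
qed

lemma orthogonal_family_normalization:
  fixes c :: "nat \<Rightarrow> 'a::rc_field vec"
  assumes cc: "\<And>m. m < r \<Longrightarrow> c m \<in> carrier_vec n"
    and orth: "\<And>i j. i < r \<Longrightarrow> j < r \<Longrightarrow> i \<noteq> j \<Longrightarrow> c j \<bullet>c c i = 0"
    and rn: "r \<le> n"
  shows "\<exists>Q. orthonormal_mat Q n r \<and> (\<forall>m<r. of_real (sqrt (sq_norm_vec (c m))) \<cdot>\<^sub>v col Q m = c m)"
proof -
  have "\<exists>Q. orthonormal_mat Q n k \<and> (\<forall>m<k. of_real (sqrt (sq_norm_vec (c m))) \<cdot>\<^sub>v col Q m = c m)
      \<and> (\<forall>m<k. \<forall>l. k \<le> l \<and> l < r \<longrightarrow> c l \<bullet>c col Q m = 0)" if "k \<le> r" for k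
    using that
  proof (induct k)
    case 0
    show ?case
      using orthonormal_mat_empty by (intro exI[of _ "0\<^sub>m n 0"]) simp
  next
    case (Suc k)
    from Suc(1)[OF Suc_leD[OF Suc(2)]] obtain Q where Q: "orthonormal_mat Q n k"
      and Qc: "\<forall>m<k. of_real (sqrt (sq_norm_vec (c m))) \<cdot>\<^sub>v col Q m = c m"
      and Qo: "\<forall>m<k. \<forall>l. k \<le> l \<and> l < r \<longrightarrow> c l \<bullet>c col Q m = 0"
      by blast
    have k: "k < r"
      using Suc(2) by simp
    obtain u where u: "u \<in> carrier_vec n" "u \<bullet>c u = 1" and uQ: "\<forall>m<k. u \<bullet>c col Q m = 0"
      and uc: "\<forall>l. k < l \<and> l < r \<longrightarrow> c l \<bullet>c u = 0"
      and ck: "of_real (sqrt (sq_norm_vec (c k))) \<cdot>\<^sub>v u = c k"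
      using exists_unit_normalizing[OF cc orth rn k Q Qo] by blast
    define Q' where "Q' = append_cols Q (mat_of_cols n [u])"
    have Q': "orthonormal_mat Q' n (Suc k)"
      unfolding Q'_def using uQ by (intro orthonormal_mat_append_unit[OF Q u]) auto
    have col_Q': "col Q' m = (if m < k then col Q m else u)" if "m < Suc k" for m
      unfolding Q'_def by (rule col_append_cols_unit[OF orthonormal_matD(1)[OF Q] u(1) that])
    have Q'c: "of_real (sqrt (sq_norm_vec (c m))) \<cdot>\<^sub>v col Q' m = c m" if "m < Suc k" for m
    proof (cases "m < k")
      case True
      then have "col Q' m = col Q m"
        using col_Q'[OF that] by simp
      then show ?thesis
        using Qc True by simp
    next
      case False
      then have "m = k" "col Q' m = u"
        using col_Q'[OF that] that by auto
      then show ?thesis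
        using ck by simp
    qed
    have Q'o: "c l \<bullet>c col Q' m = 0" if "m < Suc k" "Suc k \<le> l" "l < r" for m l
    proof (cases "m < k")
      case True
      then show ?thesis
        using Qo col_Q'[OF that(1)] that(2,3) by simp
    next
      case False
      then show ?thesis
        using uc col_Q'[OF that(1)] that(2,3) by simp
    qed
    show ?case
      by (intro exI[of _ Q'] conjI allI impI Q' Q'c Q'o) simp_all
  qed
  from this[OF le_refl] show ?thesis
    by blast
qed

lemma real_part_cscalar_contraction_le:
  fixes D :: "'a::rc_field mat"
  assumes D: "D \<in> carrier_mat r r" and contr: "\<And>v. v \<in> carrier_vec r \<Longrightarrow> sq_norm_vec (D *\<^sub>v v) \<le> sq_norm_vec v"
    and q: "q \<in> carrier_vec r" "q \<bullet>c q = 1" and u: "u \<in> carrier_vec r" "u \<bullet>c u = 1"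
  shows "real_part ((D *\<^sub>v q) \<bullet>c u) \<le> 1"
proof -
  have "sq_norm_vec (D *\<^sub>v q) \<le> 1"
    using contr[OF q(1)] sq_norm_vec_eq_1[OF q(2)] by simp
  then show ?thesis
    using real_part_cscalar_le[of "D *\<^sub>v q" r u] D q(1) u sq_norm_vec_eq_1[OF u(2)] by simp
qed

lemma mat_trace_contraction_le_polar:
  fixes G D U Q :: "'a::rc_field mat"
  assumes G: "G \<in> carrier_mat r r" and U: "orthonormal_mat U r r" and Q: "orthonormal_mat Q r r"
    and GU: "\<And>m. m < r \<Longrightarrow> G *\<^sub>v col U m = of_real (\<sigma> m) \<cdot>\<^sub>v col Q m" and \<sigma>: "\<And>m. \<sigma> m \<ge> 0"
    and D: "D \<in> carrier_mat r r" and contr: "\<forall>v\<in>carrier_vec r. sq_norm_vec (D *\<^sub>v v) \<le> sq_norm_vec v"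
  shows "real_part (mat_trace (D * G)) \<le> real_part (mat_trace (U * mat_adjoint Q * G))"
proof -
  have Uc: "U \<in> carrier_mat r r" and Qc: "Q \<in> carrier_mat r r"
    using U Q orthonormal_matD by auto
  have u: "col U m \<in> carrier_vec r" and q: "col Q m \<in> carrier_vec r" for m
    using Uc Qc by (metis carrier_matD(1) col_dim)+
  have trace: "real_part (mat_trace (X * G)) = (\<Sum>m<r. \<sigma> m * real_part ((X *\<^sub>v col Q m) \<bullet>c col U m))"
    if X: "X \<in> carrier_mat r r" for X
  proof -
    have "(X * G) *\<^sub>v col U m = of_real (\<sigma> m) \<cdot>\<^sub>v (X *\<^sub>v col Q m)" if "m < r" for m
      using assoc_mult_mat_vec[OF X G u] GU[OF that] mult_mat_vec[OF X q] by simp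
    moreover have "(of_real (\<sigma> m) \<cdot>\<^sub>v (X *\<^sub>v col Q m)) \<bullet>c col U m = of_real (\<sigma> m) * ((X *\<^sub>v col Q m) \<bullet>c col U m)"
      for m
      by (rule smult_scalar_prod_distrib[OF mult_mat_vec_carrier[OF X q] carrier_vec_conjugate[OF u]])
    ultimately show ?thesis
      unfolding mat_trace_unitary[OF U mult_carrier_mat[OF X G]] real_part_sum by simp
  qed
  define Z where "Z = U * mat_adjoint Q"
  have Zc: "Z \<in> carrier_mat r r"
    unfolding Z_def using Uc Qc by simp
  have "Z * Q = U"
    unfolding Z_def using Uc Qc orthonormal_matD(2)[OF Q]
    by (simp add: assoc_mult_mat[OF Uc mat_adjoint_carrier[OF Qc] Qc])
  then have "Z *\<^sub>v col Q m = col U m" if "m < r" for m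
    using col_mult2[OF Zc Qc that] by simp
  then have "real_part (mat_trace (Z * G)) = (\<Sum>m<r. \<sigma> m)"
    unfolding trace[OF Zc] using orthonormal_mat_col[OF U] real_part_of_real[where 'a='a, of 1] by simp
  moreover have "real_part ((D *\<^sub>v col Q m) \<bullet>c col U m) \<le> 1" if "m < r" for m
    by (rule real_part_cscalar_contraction_le[OF D])
      (use contr q u orthonormal_mat_col[OF Q that that] orthonormal_mat_col[OF U that that] in simp_all)
  then have "real_part (mat_trace (D * G)) \<le> (\<Sum>m<r. \<sigma> m)"
    unfolding trace[OF D] using \<sigma> by (intro sum_mono) (simp add: mult_left_le)
  ultimately show ?thesis
    unfolding Z_def by simp
qed

text \<open>With a spectral decomposition \<open>G\<^sup>H G = U diag(\<sigma>\<^sup>2) U\<^sup>H\<close>, the columns \<open>G u\<^sub>m\<close> are orthogonal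
  with norms \<open>\<sigma>\<^sub>m\<close>; normalizing them to \<open>q\<^sub>m\<close> gives the polar factor \<open>Z = U Q\<^sup>H\<close>, for which
  \<open>Re tr(Z G) = \<Sum>\<sigma>\<^sub>m\<close>, while \<open>Re tr(D G) \<le> \<Sum>\<sigma>\<^sub>m\<close> for every contraction \<open>D\<close>.\<close>

theorem procrustes:
  fixes G :: "'a::rc_field mat"
  assumes G: "G \<in> carrier_mat r r"
  shows "\<exists>Z. orthonormal_mat Z r r \<and>
    (\<forall>D\<in>carrier_mat r r. (\<forall>v\<in>carrier_vec r. sq_norm_vec (D *\<^sub>v v) \<le> sq_norm_vec v) \<longrightarrow>
       real_part (mat_trace (D * G)) \<le> real_part (mat_trace (Z * G)))"
proof -
  define A where "A = mat_adjoint G * G"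
  have A: "A \<in> carrier_mat r r"
    unfolding A_def using G by (metis mat_adjoint_carrier mult_carrier_mat)
  have "mat_adjoint A = A"
    unfolding A_def mat_adjoint_mult[OF mat_adjoint_carrier[OF G] G] by simp
  then obtain U d where U: "orthonormal_mat U r r"
    and eigen: "\<forall>j<r. A *\<^sub>v col U j = of_real (d j) \<cdot>\<^sub>v col U j"
    using spectral_theorem[OF A] by blast
  have u: "col U m \<in> carrier_vec r" for m
    using orthonormal_matD(1)[OF U] by (metis carrier_matD(1) col_dim)
  define c where "c m = G *\<^sub>v col U m" for m
  have cc: "c m \<in> carrier_vec r" for m
    unfolding c_def using G u[of m] by simp
  have orth: "c j \<bullet>c c i = 0" if "i < r" "j < r" "i \<noteq> j" for i j
  proof -
    have "c j \<bullet>c c i = col U j \<bullet>c (mat_adjoint G *\<^sub>v (G *\<^sub>v col U i))"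
      unfolding c_def by (rule cscalar_mult_mat_vec[OF G u]) (use G u in simp)
    also have "mat_adjoint G *\<^sub>v (G *\<^sub>v col U i) = A *\<^sub>v col U i"
      unfolding A_def by (rule assoc_mult_mat_vec[symmetric, OF mat_adjoint_carrier[OF G] G u])
    also have "col U j \<bullet>c (A *\<^sub>v col U i) = of_real (d i) * (col U j \<bullet>c col U i)"
      using eigen that u by (simp add: conjugate_smult_vec)
    also have "col U j \<bullet>c col U i = 0"
      using orthonormal_mat_col[OF U that(1,2)] that(3) by simp
    finally show ?thesis
      by simp
  qed
  have "\<exists>Q. orthonormal_mat Q r r \<and> (\<forall>m<r. of_real (sqrt (sq_norm_vec (c m))) \<cdot>\<^sub>v col Q m = c m)"
    by (rule orthogonal_family_normalization) (use cc orth in auto)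
  then obtain Q where Q: "orthonormal_mat Q r r"
    and Qc: "\<forall>m<r. of_real (sqrt (sq_norm_vec (c m))) \<cdot>\<^sub>v col Q m = c m"
    by blast
  define \<sigma> where "\<sigma> m = sqrt (sq_norm_vec (c m))" for m
  have \<sigma>: "\<sigma> m \<ge> 0" for m
    unfolding \<sigma>_def by (simp add: sq_norm_vec_nonneg)
  have GU: "G *\<^sub>v col U m = of_real (\<sigma> m) \<cdot>\<^sub>v col Q m" if "m < r" for m
    using Qc that unfolding c_def \<sigma>_def by simp
  show ?thesis
  proof (intro exI[of _ "U * mat_adjoint Q"] conjI ballI impI)
    show "orthonormal_mat (U * mat_adjoint Q) r r"
      by (rule orthonormal_mat_mult[OF U unitary_adjoint[OF Q]])
    fix D :: "'a mat"
    assume "D \<in> carrier_mat r r" "\<forall>v\<in>carrier_vec r. sq_norm_vec (D *\<^sub>v v) \<le> sq_norm_vec v"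
    then show "real_part (mat_trace (D * G)) \<le> real_part (mat_trace (U * mat_adjoint Q * G))"
      using mat_trace_contraction_le_polar[OF G U Q GU \<sigma>] by simp
  qed
qed

section \<open>Rotating coordinates\<close>

lemma mat_adjoint_one [simp]: "mat_adjoint (1\<^sub>m n :: 'a::rc_field mat) = 1\<^sub>m n"
  by (rule eq_matI) auto

lemma orthonormal_mat_one: "orthonormal_mat (1\<^sub>m n :: 'a::rc_field mat) n n"
  by (rule orthonormal_matI) simp_all

lemma mat_range_mult_subset:
  fixes A :: "'a::comm_ring mat"
  assumes A: "A \<in> carrier_mat n k" and M: "M \<in> carrier_mat k m"
  shows "mat_range (A * M) \<subseteq> mat_range A"
proof
  fix v
  assume "v \<in> mat_range (A * M)"
  then obtain z where z: "z \<in> carrier_vec m" "v = (A * M) *\<^sub>v z"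
    unfolding mat_range_def using A M by auto
  then have "v = A *\<^sub>v (M *\<^sub>v z)"
    using assoc_mult_mat_vec[OF A M z(1)] by simp
  then show "v \<in> mat_range A"
    unfolding mat_range_def using A M z(1) by auto
qed

lemma rotated_basis:
  fixes B Z :: "'a::rc_field mat"
  assumes B: "orthonormal_mat B n r" and Z: "orthonormal_mat Z r r"
  shows "orthonormal_mat (B * mat_adjoint Z) n r"
    and "mat_range B \<subseteq> mat_range (B * mat_adjoint Z)"
    and "v \<in> carrier_vec n \<Longrightarrow> mat_adjoint (B * mat_adjoint Z) *\<^sub>v v = Z *\<^sub>v (mat_adjoint B *\<^sub>v v)"
proof -
  have Bc: "B \<in> carrier_mat n r" and Zc: "Z \<in> carrier_mat r r"
    using B Z orthonormal_matD by auto
  show Vh: "orthonormal_mat (B * mat_adjoint Z) n r"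
    by (rule orthonormal_mat_mult[OF B unitary_adjoint[OF Z]])
  have "B * mat_adjoint Z * Z = B"
    using Bc Zc orthonormal_matD(2)[OF Z] by (simp add: assoc_mult_mat[OF Bc mat_adjoint_carrier[OF Zc] Zc])
  then show "mat_range B \<subseteq> mat_range (B * mat_adjoint Z)"
    using mat_range_mult_subset[OF orthonormal_matD(1)[OF Vh] Zc] by simp
  show "mat_adjoint (B * mat_adjoint Z) *\<^sub>v v = Z *\<^sub>v (mat_adjoint B *\<^sub>v v)" if "v \<in> carrier_vec n"
    unfolding mat_adjoint_mult[OF Bc mat_adjoint_carrier[OF Zc]]
    using assoc_mult_mat_vec[OF Zc mat_adjoint_carrier[OF Bc] that] by simp
qed

lemma sq_norm_adjoint_mult_le:
  fixes V B :: "'a::rc_field mat"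
  assumes V: "orthonormal_mat V n r" and B: "orthonormal_mat B n s" and v: "v \<in> carrier_vec s"
  shows "sq_norm_vec ((mat_adjoint V * B) *\<^sub>v v) \<le> sq_norm_vec v"
proof -
  have Vc: "V \<in> carrier_mat n r" and Bc: "B \<in> carrier_mat n s"
    using V B orthonormal_matD by auto
  then show ?thesis
    using sq_norm_mat_adjoint_le[OF V mult_mat_vec_carrier[OF Bc v]] orthonormal_mat_sq_norm[OF B v]
      assoc_mult_mat_vec[OF mat_adjoint_carrier[OF Vc] Bc v] by simp
qed

lemma sq_norm_diff_orthonormal:
  fixes V B :: "'a::rc_field mat"
  assumes V: "orthonormal_mat V n r" and B: "orthonormal_mat B n s"
    and x: "x \<in> carrier_vec r" and y: "y \<in> carrier_vec s"
  shows "sq_norm_vec (V *\<^sub>v x - B *\<^sub>v y) =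
    sq_norm_vec x + sq_norm_vec y - 2 * real_part (((mat_adjoint V * B) *\<^sub>v y) \<bullet>c x)"
proof -
  have Vc: "V \<in> carrier_mat n r" and Bc: "B \<in> carrier_mat n s"
    using V B orthonormal_matD by auto
  have Vx: "V *\<^sub>v x \<in> carrier_vec n" and By: "B *\<^sub>v y \<in> carrier_vec n"
    using Vc Bc x y by simp_all
  have VBy: "(mat_adjoint V * B) *\<^sub>v y \<in> carrier_vec r"
    using Vc Bc y by (metis mat_adjoint_carrier mult_carrier_mat mult_mat_vec_carrier)
  have "(V *\<^sub>v x) \<bullet>c (B *\<^sub>v y) = x \<bullet>c (mat_adjoint V *\<^sub>v (B *\<^sub>v y))"
    by (rule cscalar_mult_mat_vec[OF Vc x By])
  also have "mat_adjoint V *\<^sub>v (B *\<^sub>v y) = (mat_adjoint V * B) *\<^sub>v y"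
    by (rule assoc_mult_mat_vec[symmetric, OF mat_adjoint_carrier[OF Vc] Bc y])
  also have "x \<bullet>c ((mat_adjoint V * B) *\<^sub>v y) = conjugate (((mat_adjoint V * B) *\<^sub>v y) \<bullet>c x)"
    by (rule cscalar_commute[OF VBy x])
  finally show ?thesis
    using sq_norm_vec_diff[OF Vx By] orthonormal_mat_sq_norm[OF V x] orthonormal_mat_sq_norm[OF B y]
    by simp
qed

lemma sum_sq_norm_diff_orthonormal:
  fixes V B :: "'a::rc_field mat"
  assumes V: "orthonormal_mat V n r" and B: "orthonormal_mat B n r"
    and xy: "\<And>p. p \<in> P \<Longrightarrow> x p \<in> carrier_vec r \<and> y p \<in> carrier_vec r"
  shows "(\<Sum>p\<in>P. sq_norm_vec (V *\<^sub>v x p - B *\<^sub>v y p)) =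
    (\<Sum>p\<in>P. sq_norm_vec (x p) + sq_norm_vec (y p)) -
    2 * real_part (mat_trace ((mat_adjoint V * B) * mat r r (\<lambda>(k, i). \<Sum>p\<in>P. y p $ k * conjugate (x p $ i))))"
proof -
  have VB: "mat_adjoint V * B \<in> carrier_mat r r"
    using V B orthonormal_matD(1) by (metis mat_adjoint_carrier mult_carrier_mat)
  have "(\<Sum>p\<in>P. sq_norm_vec (V *\<^sub>v x p - B *\<^sub>v y p)) =
      (\<Sum>p\<in>P. sq_norm_vec (x p) + sq_norm_vec (y p) - 2 * real_part (((mat_adjoint V * B) *\<^sub>v y p) \<bullet>c x p))"
    using sq_norm_diff_orthonormal[OF V B] xy by (intro sum.cong) auto
  also have "\<dots> = (\<Sum>p\<in>P. sq_norm_vec (x p) + sq_norm_vec (y p)) -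
      2 * real_part (\<Sum>p\<in>P. ((mat_adjoint V * B) *\<^sub>v y p) \<bullet>c x p)"
    by (simp add: real_part_sum sum_subtractf sum_distrib_left)
  finally show ?thesis
    by (simp only: sum_cscalar_eq_mat_trace[OF VB xy])
qed

theorem exists_orthonormal_coordinates_closer:
  fixes V B :: "'a::rc_field mat" and w w' :: "'p \<Rightarrow> 'a vec"
  assumes V: "orthonormal_mat V n r" and B: "orthonormal_mat B n r"
    and w: "\<And>p. p \<in> P \<Longrightarrow> w p \<in> mat_range V" and w': "\<And>p. p \<in> P \<Longrightarrow> w' p \<in> mat_range B"
  shows "\<exists>Vh. orthonormal_mat Vh n r \<and> mat_range B \<subseteq> mat_range Vh \<and>
    (\<Sum>p\<in>P. sq_norm_vec (mat_adjoint V *\<^sub>v w p - mat_adjoint Vh *\<^sub>v w' p)) \<le>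
    (\<Sum>p\<in>P. sq_norm_vec (w p - w' p))"
proof -
  have Vc: "V \<in> carrier_mat n r" and Bc: "B \<in> carrier_mat n r"
    using V B orthonormal_matD by auto
  define x where "x p = mat_adjoint V *\<^sub>v w p" for p
  define y where "y p = mat_adjoint B *\<^sub>v w' p" for p
  have xy: "x p \<in> carrier_vec r \<and> y p \<in> carrier_vec r" for p
    unfolding x_def y_def carrier_vec_def using Vc Bc by simp
  define G where "G = mat r r (\<lambda>(k, i). \<Sum>p\<in>P. y p $ k * conjugate (x p $ i))"
  obtain Z where Z: "orthonormal_mat Z r r"
    and Z_max: "\<And>D. D \<in> carrier_mat r r \<Longrightarrow> (\<forall>v\<in>carrier_vec r. sq_norm_vec (D *\<^sub>v v) \<le> sq_norm_vec v) \<Longrightarrow>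
      real_part (mat_trace (D * G)) \<le> real_part (mat_trace (Z * G))"
    using procrustes[of G r] unfolding G_def by auto
  have Zc: "Z \<in> carrier_mat r r"
    using orthonormal_matD(1)[OF Z] .
  define Vh where "Vh = B * mat_adjoint Z"
  have "w' p \<in> carrier_vec n" if "p \<in> P" for p
    using w'[OF that] Bc unfolding mat_range_def by auto
  then have "mat_adjoint Vh *\<^sub>v w' p = Z *\<^sub>v y p" if "p \<in> P" for p
    unfolding Vh_def y_def using rotated_basis(3)[OF B Z] that by simp
  then have "(\<Sum>p\<in>P. sq_norm_vec (mat_adjoint V *\<^sub>v w p - mat_adjoint Vh *\<^sub>v w' p)) =
      (\<Sum>p\<in>P. sq_norm_vec (1\<^sub>m r *\<^sub>v x p - Z *\<^sub>v y p))"
    using xy unfolding x_def by (intro sum.cong) auto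
  also have "\<dots> = (\<Sum>p\<in>P. sq_norm_vec (x p) + sq_norm_vec (y p)) - 2 * real_part (mat_trace (Z * G))"
    unfolding sum_sq_norm_diff_orthonormal[OF orthonormal_mat_one Z xy] G_def
    using Zc by simp
  also have "\<dots> \<le> (\<Sum>p\<in>P. sq_norm_vec (x p) + sq_norm_vec (y p)) -
      2 * real_part (mat_trace ((mat_adjoint V * B) * G))"
  proof -
    have "mat_adjoint V * B \<in> carrier_mat r r"
      using Vc Bc by (metis mat_adjoint_carrier mult_carrier_mat)
    from Z_max[OF this] show ?thesis
      using sq_norm_adjoint_mult_le[OF V B] by simp
  qed
  also have "\<dots> = (\<Sum>p\<in>P. sq_norm_vec (V *\<^sub>v x p - B *\<^sub>v y p))"
    unfolding sum_sq_norm_diff_orthonormal[OF V B xy] G_def ..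
  also have "\<dots> = (\<Sum>p\<in>P. sq_norm_vec (w p - w' p))"
    unfolding x_def y_def using orthonormal_mat_range_eq[OF V w] orthonormal_mat_range_eq[OF B w']
    by simp
  finally show ?thesis
    using rotated_basis(1,2)[OF B Z] unfolding Vh_def by blast
qed

section \<open>Orthonormal bases of spans\<close>

abbreviation vspan :: "nat \<Rightarrow> 'a::field vec set \<Rightarrow> 'a vec set" where
  "vspan n T \<equiv> LinearCombinations.module.span class_ring (module_vec TYPE('a) n) T"

abbreviation vdim :: "nat \<Rightarrow> 'a::field vec set \<Rightarrow> nat" where
  "vdim n T \<equiv> vectorspace.dim class_ring ((module_vec TYPE('a) n)\<lparr>carrier := vspan n T\<rparr>)"

lemma orthonormal_set_not_lin_dep:
  fixes S :: "'a::rc_field vec set"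
  assumes S: "S \<subseteq> carrier_vec n" "finite S"
    and on: "\<And>u. u \<in> S \<Longrightarrow> u \<bullet>c u = 1" "\<And>u v. u \<in> S \<Longrightarrow> v \<in> S \<Longrightarrow> u \<noteq> v \<Longrightarrow> u \<bullet>c v = 0"
  shows "\<not> LinearCombinations.module.lin_dep class_ring (module_vec TYPE('a) n) S"
proof
  interpret vs: vec_space "TYPE('a)" n .
  assume "vs.lin_dep S"
  from vs.finite_lin_dep[OF S(2) this] S(1) obtain a v where
    a: "vs.lincomb a S = 0\<^sub>v n" and v: "v \<in> S" and av: "a v \<noteq> 0" by auto
  have vc: "v \<in> carrier_vec n" using v S by auto
  have "vs.lincomb a S \<bullet>c v = (\<Sum>i<n. (\<Sum>x\<in>S. a x * x $ i) * conjugate (v $ i))"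
    using vc S by (simp add: scalar_prod_def vs.lincomb_index atLeast0LessThan)
  also have "\<dots> = (\<Sum>x\<in>S. a x * (\<Sum>i<n. x $ i * conjugate (v $ i)))"
    by (simp add: sum_distrib_left sum_distrib_right mult_ac, subst sum.swap, rule refl)
  also have "\<dots> = (\<Sum>x\<in>S. a x * (x \<bullet>c v))"
  proof (intro sum.cong refl)
    fix x assume "x \<in> S"
    hence "x \<in> carrier_vec n" using S by auto
    thus "a x * (\<Sum>i<n. x $ i * conjugate (v $ i)) = a x * (x \<bullet>c v)"
      using vc by (simp add: scalar_prod_def atLeast0LessThan)
  qed
  also have "\<dots> = (\<Sum>x\<in>S. if x = v then a v else 0)"
    by (intro sum.cong refl) (use on v in auto)
  also have "\<dots> = a v" using v S by simp
  finally have "a v = 0" using a vc by simp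
  thus False using av by simp
qed

lemma vspan_subspace:
  fixes T :: "'a::field vec set"
  assumes T: "T \<subseteq> carrier_vec n" "finite T"
  shows "vectorspace class_ring ((module_vec TYPE('a) n)\<lparr>carrier := vspan n T\<rparr>)"
    and "vectorspace.fin_dim class_ring ((module_vec TYPE('a) n)\<lparr>carrier := vspan n T\<rparr>)"
    and "\<And>S. S \<subseteq> vspan n T \<Longrightarrow> LinearCombinations.module.lin_dep class_ring ((module_vec TYPE('a) n)\<lparr>carrier := vspan n T\<rparr>) S
            = LinearCombinations.module.lin_dep class_ring (module_vec TYPE('a) n) S"
    and "vspan n T \<subseteq> carrier_vec n"
proof -
  interpret vs: vec_space "TYPE('a)" n .
  have sub: "VectorSpace.subspace class_ring (vs.span T) (module_vec TYPE('a) n)"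
    using vs.span_is_subspace[of T] T by simp
  show vsW: "vectorspace class_ring ((module_vec TYPE('a) n)\<lparr>carrier := vspan n T\<rparr>)"
    using vs.subspace_is_vs[OF sub] .
  have subm: "submodule class_ring (vs.span T) (module_vec TYPE('a) n)"
    using vs.span_is_submodule[of T] T by simp
  show "\<And>S. S \<subseteq> vspan n T \<Longrightarrow> LinearCombinations.module.lin_dep class_ring ((module_vec TYPE('a) n)\<lparr>carrier := vspan n T\<rparr>) S
            = LinearCombinations.module.lin_dep class_ring (module_vec TYPE('a) n) S"
    using vs.span_li_not_depend(2)[OF _ subm] by simp
  interpret W: vectorspace class_ring "(module_vec TYPE('a) n)\<lparr>carrier := vspan n T\<rparr>" by (rule vsW)
  have TW: "T \<subseteq> vs.span T" using vs.in_own_span T by simp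
  have "W.span T = vs.span T" using vs.span_li_not_depend(1)[OF TW subm] by simp
  thus "W.fin_dim" unfolding W.fin_dim_def using TW T by auto
  show "vspan n T \<subseteq> carrier_vec n" using vs.span_is_subset2[of T] T by simp
qed

lemma orthonormal_cols_le_vdim:
  fixes B :: "'a::rc_field mat"
  assumes T: "T \<subseteq> carrier_vec n" "finite T" and B: "orthonormal_mat B n k"
    and cols: "\<And>j. j < k \<Longrightarrow> col B j \<in> vspan n T"
  shows "k \<le> vdim n T"
proof -
  interpret W: vectorspace class_ring "(module_vec TYPE('a) n)\<lparr>carrier := vspan n T\<rparr>"
    by (rule vspan_subspace(1)[OF T])
  have Bc: "B \<in> carrier_mat n k" using orthonormal_matD(1)[OF B] .
  define S where "S = col B ` {..<k}"
  have inj: "inj_on (col B) {..<k}"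
  proof (rule inj_onI)
    fix i j assume ij: "i \<in> {..<k}" "j \<in> {..<k}" and e: "col B i = col B j"
    show "i = j"
    proof (rule ccontr)
      assume "i \<noteq> j"
      hence "col B j \<bullet>c col B i = 0" using orthonormal_mat_col[OF B, of i j] ij by simp
      moreover have "col B j \<bullet>c col B j = 1" using orthonormal_mat_col[OF B, of j j] ij by simp
      ultimately show False using e by simp
    qed
  qed
  have cardS: "card S = k" unfolding S_def using card_image[OF inj] by simp
  have Sc: "S \<subseteq> carrier_vec n"
  proof
    fix x assume "x \<in> S"
    then obtain i where "x = col B i" unfolding S_def by auto
    thus "x \<in> carrier_vec n" using col_dim[of B i] Bc by simp
  qed
  have SW: "S \<subseteq> vspan n T" unfolding S_def using cols by auto
  have li: "\<not> LinearCombinations.module.lin_dep class_ring (module_vec TYPE('a) n) S"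
  proof (rule orthonormal_set_not_lin_dep[OF Sc])
    show "finite S" unfolding S_def by simp
    show "u \<bullet>c u = 1" if "u \<in> S" for u
    proof -
      obtain i where i: "i < k" "u = col B i" using \<open>u \<in> S\<close> unfolding S_def by auto
      thus ?thesis using orthonormal_mat_col[OF B i(1) i(1)] by simp
    qed
    show "u \<bullet>c v = 0" if "u \<in> S" "v \<in> S" "u \<noteq> v" for u v
    proof -
      obtain i where i: "i < k" "u = col B i" using \<open>u \<in> S\<close> unfolding S_def by auto
      obtain j where j: "j < k" "v = col B j" using \<open>v \<in> S\<close> unfolding S_def by auto
      have "i \<noteq> j" using i j that by auto
      thus ?thesis using orthonormal_mat_col[OF B j(1) i(1)] i j by simp
    qed
  qed
  hence "\<not> W.lin_dep S" using vspan_subspace(3)[OF T SW] by simp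
  from W.li_le_dim(2)[OF vspan_subspace(2)[OF T] _ this] SW
  show ?thesis using cardS by simp
qed

lemma vdim_le:
  fixes T :: "'a::field vec set"
  assumes T: "T \<subseteq> carrier_vec n" "finite T"
  shows "vdim n T \<le> n"
proof -
  interpret vs: vec_space "TYPE('a)" n .
  interpret W: vectorspace class_ring "(module_vec TYPE('a) n)\<lparr>carrier := vspan n T\<rparr>"
    by (rule vspan_subspace(1)[OF T])
  obtain \<beta> where \<beta>: "finite \<beta>" "W.basis \<beta>" using W.finite_basis_exists[OF vspan_subspace(2)[OF T]] by blast
  have dim: "W.dim = card \<beta>" by (rule W.dim_basis[OF \<beta>])
  have \<beta>W: "\<beta> \<subseteq> vspan n T" using \<beta>(2) unfolding W.basis_def by simp
  have "\<not> W.lin_dep \<beta>" using \<beta>(2) unfolding W.basis_def by simp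
  hence li: "\<not> vs.lin_dep \<beta>" using vspan_subspace(3)[OF T \<beta>W] by simp
  have \<beta>c: "\<beta> \<subseteq> carrier_vec n" using \<beta>W vspan_subspace(4)[OF T] by auto
  have "card \<beta> \<le> vs.dim" using vs.li_le_dim(2)[OF vs.fin_dim _ li] \<beta>c by simp
  thus ?thesis using dim vs.dim_is_n by simp
qed

lemma mat_range_eq_vspan_cols:
  fixes B :: "'a::field mat"
  assumes B: "B \<in> carrier_mat n k"
  shows "mat_range B = vspan n (set (cols B))"
proof -
  interpret vs: vec_space "TYPE('a)" n .
  have "vs.col_space B = {y \<in> carrier_vec (dim_row B). \<exists>x\<in>carrier_vec (dim_col B). B *\<^sub>v x = y}"
    by (rule vs.col_space_eq[OF B])
  also have "\<dots> = mat_range B" unfolding mat_range_def using B by auto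
  finally show ?thesis unfolding vs.col_space_def by simp
qed

lemma vspan_subset_mat_range:
  fixes B :: "'a::field mat"
  assumes B: "B \<in> carrier_mat n k" and T: "T \<subseteq> mat_range B"
  shows "vspan n T \<subseteq> mat_range B"
proof -
  interpret vs: vec_space "TYPE('a)" n .
  show ?thesis unfolding mat_range_eq_vspan_cols[OF B]
    by (rule vs.span_subsetI[OF cols_dim[of B, unfolded carrier_matD(1)[OF B]]], use T mat_range_eq_vspan_cols[OF B] in simp)
qed

lemma mat_range_subset_vspan:
  fixes B :: "'a::field mat"
  assumes B: "B \<in> carrier_mat n k" and T: "T \<subseteq> carrier_vec n"
    and cols: "\<And>j. j < k \<Longrightarrow> col B j \<in> vspan n T"
  shows "mat_range B \<subseteq> vspan n T"
proof -
  interpret vs: vec_space "TYPE('a)" n .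
  have "set (cols B) \<subseteq> vs.span T"
  proof
    fix x assume "x \<in> set (cols B)"
    then obtain j where j: "j < k" "x = col B j" using B by (auto simp: cols_def)
    thus "x \<in> vs.span T" using cols by simp
  qed
  thus ?thesis unfolding mat_range_eq_vspan_cols[OF B] using vs.span_subsetI[OF T] by simp
qed

lemma vspan_diff:
  fixes T :: "'a::field vec set"
  assumes T: "T \<subseteq> carrier_vec n" and t: "t \<in> vspan n T" and w: "w \<in> vspan n T"
  shows "t - w \<in> vspan n T"
proof -
  interpret vs: vec_space "TYPE('a)" n .
  have fT: "vs.span T \<subseteq> carrier_vec n" using vs.span_is_subset2[OF T] by simp
  have tc: "t \<in> carrier_vec n" and wc: "w \<in> carrier_vec n" using t w fT by auto
  have "(-1) \<cdot>\<^sub>v w \<in> vs.span T" by (rule vs.smult_in_span[OF T w])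
  hence "t + (-1) \<cdot>\<^sub>v w \<in> vs.span T" using vs.span_add1[OF T t] by simp
  moreover have "t + (-1) \<cdot>\<^sub>v w = t - w" by (intro eq_vecI) (use tc wc in auto)
  ultimately show ?thesis by simp
qed

lemma mat_range_append_cols:
  fixes B :: "'a::comm_ring_1 mat"
  assumes B: "B \<in> carrier_mat n k" and C: "C \<in> carrier_mat n m"
  shows "mat_range B \<subseteq> mat_range (append_cols B C)"
proof
  fix v assume "v \<in> mat_range B"
  then obtain z where z: "z \<in> carrier_vec k" "v = B *\<^sub>v z" unfolding mat_range_def using B by auto
  define z' where "z' = vec (k + m) (\<lambda>i. if i < k then z $ i else 0)"
  have "append_cols B C *\<^sub>v z' = B *\<^sub>v z"
  proof (rule eq_vecI)
    fix i assume "i < dim_vec (B *\<^sub>v z)"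
    hence i: "i < n" using B by simp
    have "(append_cols B C *\<^sub>v z') $ i = (\<Sum>l<k+m. append_cols B C $$ (i,l) * z' $ l)"
      using B C i by (simp add: scalar_prod_def atLeast0LessThan z'_def)
    also have "\<dots> = (\<Sum>l<k. B $$ (i,l) * z $ l)"
      unfolding sum_lessThan_add using B C i by (simp add: append_cols_def z'_def)
    also have "\<dots> = (B *\<^sub>v z) $ i" using B z i by (simp add: scalar_prod_def atLeast0LessThan)
    finally show "(append_cols B C *\<^sub>v z') $ i = (B *\<^sub>v z) $ i" .
  qed (use B C in simp)
  moreover have "z' \<in> carrier_vec (k+m)" unfolding z'_def by simp
  ultimately show "v \<in> mat_range (append_cols B C)" unfolding mat_range_def using z B C
    by (metis (mono_tags, lifting) append_cols_dim(2) carrier_matD(2) mem_Collect_eq)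
qed

lemma exists_unit_orthogonal_component:
  fixes B :: "'a::rc_field mat"
  assumes B: "orthonormal_mat B n k" and t: "t \<in> carrier_vec n" "t \<notin> mat_range B"
  shows "\<exists>u a. u \<in> carrier_vec n \<and> u \<bullet>c u = 1 \<and> mat_adjoint B *\<^sub>v u = 0\<^sub>v k
     \<and> u = a \<cdot>\<^sub>v (t - B *\<^sub>v (mat_adjoint B *\<^sub>v t))"
proof -
  have Bc: "B \<in> carrier_mat n k" using orthonormal_matD(1)[OF B] .
  have BHc: "mat_adjoint B \<in> carrier_mat k n" using Bc by simp
  define c where "c = mat_adjoint B *\<^sub>v t"
  have cc: "c \<in> carrier_vec k" unfolding c_def using BHc t(1) by simp
  define w where "w = B *\<^sub>v c"
  have wc: "w \<in> carrier_vec n" unfolding w_def using Bc cc by simp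
  define u' where "u' = t - w"
  have u'c: "u' \<in> carrier_vec n" unfolding u'_def using wc t(1) by simp
  have "mat_adjoint B *\<^sub>v u' = mat_adjoint B *\<^sub>v t - mat_adjoint B *\<^sub>v w"
    unfolding u'_def by (rule mult_minus_distrib_mat_vec[OF BHc t(1) wc])
  also have "mat_adjoint B *\<^sub>v w = (mat_adjoint B * B) *\<^sub>v c"
    unfolding w_def by (rule assoc_mult_mat_vec[symmetric, OF BHc Bc cc])
  also have "\<dots> = c" unfolding orthonormal_matD(2)[OF B] using cc by simp
  also have "mat_adjoint B *\<^sub>v t - c = 0\<^sub>v k" unfolding c_def by (rule minus_cancel_vec, use BHc t(1) in simp)
  finally have z: "mat_adjoint B *\<^sub>v u' = 0\<^sub>v k" .
  have u'0: "u' \<noteq> 0\<^sub>v n"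
  proof
    assume u0: "u' = 0\<^sub>v n"
    have "t = w"
    proof (rule eq_vecI)
      fix i assume "i < dim_vec w"
      hence i: "i < n" using wc by simp
      have "u' $ i = 0" using u0 i by simp
      thus "t $ i = w $ i" unfolding u'_def using i wc by simp
    qed (use t wc in simp)
    hence "t \<in> mat_range B" unfolding w_def using mult_mat_vec_in_mat_range[OF Bc cc] by simp
    thus False using t by simp
  qed
  define a where "a = 1 / sqrt (sq_norm_vec u')"
  define u where "u = (of_real a :: 'a) \<cdot>\<^sub>v u'"
  have uc: "u \<in> carrier_vec n" unfolding u_def using u'c by simp
  have u1: "u \<bullet>c u = 1" unfolding u_def a_def by (rule cscalar_normalize[OF u'c u'0])
  have "mat_adjoint B *\<^sub>v u = of_real a \<cdot>\<^sub>v (mat_adjoint B *\<^sub>v u')" unfolding u_def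
    by (rule mult_mat_vec[OF BHc u'c])
  also have "\<dots> = 0\<^sub>v k" unfolding z by (intro eq_vecI) auto
  finally show ?thesis using uc u1 unfolding u_def u'_def w_def c_def by blast
qed

lemma orthonormal_mat_extend_within_vspan:
  fixes B :: "'a::rc_field mat"
  assumes T: "T \<subseteq> carrier_vec n" and B: "orthonormal_mat B n k"
    and cols: "\<And>j. j < k \<Longrightarrow> col B j \<in> vspan n T"
    and t: "t \<in> vspan n T" "t \<notin> mat_range B"
  shows "\<exists>B'. orthonormal_mat B' n (Suc k) \<and> (\<forall>j<Suc k. col B' j \<in> vspan n T)"
proof -
  interpret vs: vec_space "TYPE('a)" n .
  have Bc: "B \<in> carrier_mat n k"
    using orthonormal_matD(1)[OF B] .
  have tc: "t \<in> carrier_vec n"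
    using t(1) vs.span_is_subset2[OF T] by auto
  obtain u a where u: "u \<in> carrier_vec n" "u \<bullet>c u = 1" and Bu: "mat_adjoint B *\<^sub>v u = 0\<^sub>v k"
    and ua: "u = a \<cdot>\<^sub>v (t - B *\<^sub>v (mat_adjoint B *\<^sub>v t))"
    using exists_unit_orthogonal_component[OF B tc t(2)] by blast
  have "mat_adjoint B *\<^sub>v t \<in> carrier_vec k"
    using Bc tc by (metis mat_adjoint_carrier mult_mat_vec_carrier)
  then have "B *\<^sub>v (mat_adjoint B *\<^sub>v t) \<in> mat_range B"
    by (rule mult_mat_vec_in_mat_range[OF Bc])
  then have "B *\<^sub>v (mat_adjoint B *\<^sub>v t) \<in> vspan n T"
    using mat_range_subset_vspan[OF Bc T cols] by blast
  then have u_span: "u \<in> vspan n T"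
    unfolding ua by (intro vs.smult_in_span[OF T] vspan_diff[OF T t(1)])
  have "u \<bullet>c col B i = 0" if "i < k" for i
    using mat_adjoint_mult_vec_index[OF Bc u(1) that] Bu that by simp
  then have "orthonormal_mat (append_cols B (mat_of_cols n [u])) n (Suc k)"
    by (rule orthonormal_mat_append_unit[OF B u])
  moreover have "\<forall>j<Suc k. col (append_cols B (mat_of_cols n [u])) j \<in> vspan n T"
    using col_append_cols_unit[OF Bc u(1)] cols u_span by (simp add: less_Suc_eq)
  ultimately show ?thesis
    by blast
qed

text \<open>A maximal orthonormal family inside \<open>vspan n T\<close> spans it; maximal families exist
  because orthonormal families are independent, hence of size at most \<open>vdim n T\<close>.\<close>

lemma exists_orthonormal_basis_of_vspan:
  fixes T :: "'a::rc_field vec set"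
  assumes T: "T \<subseteq> carrier_vec n" "finite T"
  shows "\<exists>K B. orthonormal_mat B n K \<and> K \<le> vdim n T \<and> T \<subseteq> mat_range B"
proof -
  interpret vs: vec_space "TYPE('a)" n .
  define P where "P k \<longleftrightarrow> (\<exists>B. orthonormal_mat B n k \<and> (\<forall>j<k. col B j \<in> vspan n T))" for k
  have bound: "k \<le> vdim n T" if "P k" for k
    using that orthonormal_cols_le_vdim[OF T] unfolding P_def by blast
  have "P 0"
    unfolding P_def using orthonormal_mat_empty by blast
  define K where "K = (GREATEST k. P k)"
  have PK: "P K"
    unfolding K_def by (rule GreatestI_nat[of P 0 "vdim n T", OF \<open>P 0\<close> bound])
  have max: "\<not> P (Suc K)"
    using Greatest_le_nat[of P "Suc K" "vdim n T", OF _ bound] unfolding K_def[symmetric] by auto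
  obtain B where B: "orthonormal_mat B n K" and cols: "\<forall>j<K. col B j \<in> vspan n T"
    using PK unfolding P_def by blast
  have "T \<subseteq> mat_range B"
  proof
    fix t
    assume "t \<in> T"
    then have "t \<in> vspan n T"
      using vs.in_own_span[OF T(1)] by auto
    then show "t \<in> mat_range B"
      using orthonormal_mat_extend_within_vspan[OF T(1) B _ _] cols max unfolding P_def by blast
  qed
  then show ?thesis
    using B bound[OF PK] by blast
qed

theorem exists_orthonormal_mat_range_superset:
  fixes T :: "'a::rc_field vec set"
  assumes T: "T \<subseteq> carrier_vec n" "finite T" and r: "vdim n T \<le> r" "r \<le> n"
  shows "\<exists>B. orthonormal_mat B n r \<and> T \<subseteq> mat_range B"
proof -
  obtain K B where B: "orthonormal_mat B n K" and K: "K \<le> vdim n T" and TB: "T \<subseteq> mat_range B"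
    using exists_orthonormal_basis_of_vspan[OF T] by blast
  obtain C where C: "orthonormal_mat C n (r - K)" and BC: "mat_adjoint B * C = 0\<^sub>m K (r - K)"
    using exists_orthonormal_complement[OF B, of "r - K"] K r by auto
  have "orthonormal_mat (append_cols B C) n r"
    using orthonormal_mat_append_cols[OF B C BC] K r by simp
  moreover have "T \<subseteq> mat_range (append_cols B C)"
    using TB mat_range_append_cols[OF orthonormal_matD(1)[OF B] orthonormal_matD(1)[OF C]] by blast
  ultimately show ?thesis
    by blast
qed

lemma orthonormal_mat_cols_le_rows:
  fixes V :: "'a::rc_field mat"
  assumes V: "orthonormal_mat V n r"
  shows "r \<le> n"
proof -
  interpret vs: vec_space "TYPE('a)" n .
  have cols: "set (cols V) \<subseteq> carrier_vec n"
    using cols_dim[of V] orthonormal_matD(1)[OF V] by auto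
  have "col V j \<in> vspan n (set (cols V))" if "j < r" for j
    using vs.in_own_span[OF cols] that orthonormal_matD(1)[OF V] by (auto simp: cols_def)
  then have "r \<le> vdim n (set (cols V))"
    by (rule orthonormal_cols_le_vdim[OF cols finite_set V])
  also have "\<dots> \<le> n"
    by (rule vdim_le[OF cols finite_set])
  finally show ?thesis .
qed

section \<open>Tensors\<close>

lemma tidx_finite: "finite (tidx I)"
proof (rule finite_subset)
  show "tidx I \<subseteq> {xs. set xs \<subseteq> {..<sum_list I} \<and> length xs = length I}"
  proof
    fix xs assume xs: "xs \<in> tidx I"
    have "x < sum_list I" if "x \<in> set xs" for x
    proof -
      obtain k where k: "k < length xs" "x = xs ! k" using \<open>x \<in> set xs\<close> by (auto simp: in_set_conv_nth)
      have "x < I ! k" using xs k unfolding tidx_def by auto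
      also have "I ! k \<le> sum_list I" by (rule member_le_sum_list, use xs k in \<open>auto simp: tidx_def\<close>)
      finally show ?thesis .
    qed
    thus "xs \<in> {xs. set xs \<subseteq> {..<sum_list I} \<and> length xs = length I}" using xs unfolding tidx_def by auto
  qed
  show "finite {xs. set xs \<subseteq> {..<sum_list I} \<and> length xs = length I}"
    by (rule finite_lists_length_eq) simp
qed

lemma tidx_list_update:
  assumes "p \<in> tidx (J[j := m])" "t < J ! j" "j < length J"
  shows "p[j := t] \<in> tidx J"
  using assms unfolding tidx_def by (auto simp: nth_list_update)

lemma sum_tidx_list_update:
  assumes j: "j < length J"
  shows "(\<Sum>is\<in>tidx (J[j := m]). f is) = (\<Sum>p\<in>tidx (J[j := 1]). \<Sum>t<m. f (p[j := t]))"
proof -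
  have "(\<Sum>p\<in>tidx (J[j := 1]). \<Sum>t<m. f (p[j := t])) = (\<Sum>(p,t)\<in>tidx (J[j := 1]) \<times> {..<m}. f (p[j := t]))"
    by (rule sum.cartesian_product)
  also have "\<dots> = (\<Sum>is\<in>tidx (J[j := m]). f is)"
  proof (rule sum.reindex_bij_witness[where i = "\<lambda>is. (is[j := 0], is ! j)" and j = "\<lambda>(p,t). p[j := t]"])
    fix a assume a: "a \<in> tidx (J[j := 1]) \<times> {..<m}"
    obtain p t where pt: "a = (p,t)" by (cases a)
    have lp: "length p = length J" and p0: "p ! j = 0" and tm: "t < m"
      using a pt j unfolding tidx_def by (auto simp: nth_list_update)
    have "p[j := 0] = p" using p0 by (metis list_update_id)
    thus "(\<lambda>is. (is[j := 0], is ! j)) ((\<lambda>(p,t). p[j := t]) a) = a" using pt lp j by simp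
    show "(\<lambda>(p,t). p[j := t]) a \<in> tidx (J[j := m])"
      using a pt j lp unfolding tidx_def by (auto simp: nth_list_update)
    show "f ((\<lambda>(p,t). p[j := t]) a) = (\<lambda>(p,t). f (p[j := t])) a" using pt by simp
  next
    fix ix assume ix: "ix \<in> tidx (J[j := m])"
    have l: "length ix = length J" using ix unfolding tidx_def by auto
    show "(\<lambda>(p,t). p[j := t]) ((\<lambda>is. (is[j := 0], is ! j)) ix) = ix" using l j by simp
    show "(\<lambda>is. (is[j := 0], is ! j)) ix \<in> tidx (J[j := 1]) \<times> {..<m}"
      using ix j l unfolding tidx_def by (auto simp: nth_list_update)
  qed
  finally show ?thesis by simp
qed

lemma fiber_carrier [simp]: "fiber X J j p \<in> carrier_vec (J ! j)"
  unfolding fiber_def by simp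

lemma fiber_index [simp]: "t < J ! j \<Longrightarrow> fiber X J j p $ t = X (p[j := t])"
  unfolding fiber_def by simp

lemma fiber_dim [simp]: "dim_vec (fiber X J j p) = J ! j"
  unfolding fiber_def by simp

lemma fiber_minus: "fiber (X - Y) J j p = fiber X J j p - fiber Y J j p"
  by (intro eq_vecI) simp_all

lemma fiber_mode_prod:
  assumes M: "M \<in> carrier_mat m (J ! j)" and j: "j < length J" "j < length p"
  shows "fiber (mode_prod X j M) (J[j := m]) j p = M *\<^sub>v fiber X J j p"
proof (rule eq_vecI)
  fix i
  assume "i < dim_vec (M *\<^sub>v fiber X J j p)"
  then have i: "i < m"
    using M by simp
  have "fiber (mode_prod X j M) (J[j := m]) j p $ i = (\<Sum>t<J ! j. M $$ (i, t) * X (p[j := t]))"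
    unfolding mode_prod_def using M i j by simp
  also have "\<dots> = (M *\<^sub>v fiber X J j p) $ i"
    using M i by (simp add: scalar_prod_def atLeast0LessThan)
  finally show "fiber (mode_prod X j M) (J[j := m]) j p $ i = (M *\<^sub>v fiber X J j p) $ i" .
qed (use M j in simp)

lemma frob_nonneg: "frob J X \<ge> 0"
  unfolding frob_def by (simp add: sum_nonneg)

lemma frob_eq_sum_fibers:
  assumes j: "j < length J"
  shows "frob J X = sqrt (\<Sum>p\<in>tidx (J[j := 1]). sq_norm_vec (fiber X J j p))"
proof -
  have "(\<Sum>ix\<in>tidx J. (norm (X ix))^2) = (\<Sum>ix\<in>tidx (J[j := J ! j]). (norm (X ix))^2)"
    by simp
  also have "\<dots> = (\<Sum>p\<in>tidx (J[j := 1]). \<Sum>t<J ! j. (norm (X (p[j := t])))^2)"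
    by (rule sum_tidx_list_update[OF j])
  also have "\<dots> = (\<Sum>p\<in>tidx (J[j := 1]). sq_norm_vec (fiber X J j p))"
    unfolding sq_norm_vec_def by simp
  finally show ?thesis
    unfolding frob_def by simp
qed

text \<open>The mode-\<open>j\<close> product acts fiberwise, so the Frobenius norms of both sides are sums over
  the mode-\<open>j\<close> fibers, and the rotated basis is supplied by the Procrustes argument.\<close>

lemma mode_prod_orthonormal_step:
  fixes X Y :: "'a::rc_field tensor" and V B :: "'a mat"
  assumes j: "j < length J" and V: "orthonormal_mat V (J ! j) r" and B: "orthonormal_mat B (J ! j) r"
    and X: "mode_fibers J j X \<subseteq> mat_range V" and Y: "mode_fibers J j Y \<subseteq> mat_range B"
  shows "\<exists>Vh. orthonormal_mat Vh (J ! j) r \<and> mat_range B \<subseteq> mat_range Vh \<and>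
    frob (J[j := r]) (mode_prod X j (mat_adjoint V) - mode_prod Y j (mat_adjoint Vh)) \<le> frob J (X - Y)"
proof (cases "J ! j = 0")
  case True
  then have "tidx (J[j := r]) = {}"
    using orthonormal_mat_cols_le_rows[OF V] j unfolding tidx_def by (auto simp: nth_list_update)
  then show ?thesis
    using B frob_nonneg[of J "X - Y"] unfolding frob_def by auto
next
  case False
  define P where "P = tidx (J[j := 1])"
  have P: "p \<in> tidx J" "j < length p" if "p \<in> P" for p
  proof -
    have "p[j := 0] \<in> tidx J"
      using tidx_list_update[of p J j 1 0] that False j unfolding P_def by simp
    moreover have "p ! j = 0" "length p = length J"
      using that j unfolding P_def tidx_def by (auto simp: nth_list_update)
    ultimately show "p \<in> tidx J" "j < length p"
      using j by (metis list_update_id)+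
  qed
  obtain Vh where Vh: "orthonormal_mat Vh (J ! j) r" and range: "mat_range B \<subseteq> mat_range Vh"
    and le: "(\<Sum>p\<in>P. sq_norm_vec (mat_adjoint V *\<^sub>v fiber X J j p - mat_adjoint Vh *\<^sub>v fiber Y J j p))
      \<le> (\<Sum>p\<in>P. sq_norm_vec (fiber X J j p - fiber Y J j p))"
    using exists_orthonormal_coordinates_closer[OF V B, of P "fiber X J j" "fiber Y J j"] X Y P(1)
    unfolding mode_fibers_def by blast
  have adj: "mat_adjoint V \<in> carrier_mat r (J ! j)" "mat_adjoint Vh \<in> carrier_mat r (J ! j)"
    using mat_adjoint_carrier[OF orthonormal_matD(1)[OF V]] mat_adjoint_carrier[OF orthonormal_matD(1)[OF Vh]]
    by auto
  let ?Z = "mode_prod X j (mat_adjoint V) - mode_prod Y j (mat_adjoint Vh)"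
  have "frob (J[j := r]) ?Z = sqrt (\<Sum>p\<in>P. sq_norm_vec (fiber ?Z (J[j := r]) j p))"
    using frob_eq_sum_fibers[of j "J[j := r]"] j unfolding P_def by simp
  also have "\<dots> = sqrt (\<Sum>p\<in>P.
      sq_norm_vec (mat_adjoint V *\<^sub>v fiber X J j p - mat_adjoint Vh *\<^sub>v fiber Y J j p))"
    using fiber_mode_prod[OF adj(1) j P(2)] fiber_mode_prod[OF adj(2) j P(2)]
    by (simp add: fiber_minus)
  also have "\<dots> \<le> frob J (X - Y)"
    unfolding frob_eq_sum_fibers[OF j] P_def[symmetric] fiber_minus using le by simp
  finally show ?thesis
    using Vh range by blast
qed

section \<open>Compression mode by mode\<close>

lemma mode_fibers_carrier: "mode_fibers I j X \<subseteq> carrier_vec (I ! j)"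
  unfolding mode_fibers_def by auto

lemma finite_mode_fibers: "finite (mode_fibers I j X)"
  unfolding mode_fibers_def using tidx_finite by simp

lemma mlrank_mode_eq_vdim: "mlrank_mode I j X = vdim (I ! j) (mode_fibers I j X)"
  unfolding mlrank_mode_def fiber_span_def ..

lemma mode_fibers_subset_fiber_span: "mode_fibers I j X \<subseteq> fiber_span I j X"
proof -
  interpret vs: vec_space "TYPE('a)" "I ! j" .
  show ?thesis
    unfolding fiber_span_def by (rule vs.in_own_span[OF mode_fibers_carrier])
qed

lemma mlrank_mode_le: "mlrank_mode I j (X::'a::field tensor) \<le> I ! j"
  unfolding mlrank_mode_eq_vdim by (rule vdim_le[OF mode_fibers_carrier finite_mode_fibers])

lemma exists_orthonormal_mat_mode_fibers:
  fixes X :: "'a::rc_field tensor"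
  assumes "mlrank_mode I j X \<le> r" "r \<le> I ! j"
  shows "\<exists>B. orthonormal_mat B (I ! j) r \<and> mode_fibers I j X \<subseteq> mat_range B"
  using exists_orthonormal_mat_range_superset[OF mode_fibers_carrier finite_mode_fibers] assms
  unfolding mlrank_mode_eq_vdim by blast

lemma fiber_span_subset_mat_range:
  assumes "B \<in> carrier_mat (I ! j) r" "mode_fibers I j X \<subseteq> mat_range B"
  shows "fiber_span I j X \<subseteq> mat_range B"
  unfolding fiber_span_def by (rule vspan_subset_mat_range[OF assms])

theorem exists_orthonormal_mode_compression:
  fixes W W' :: "'a::rc_field tensor"
  assumes j: "j < length I" and V: "orthonormal_mat V (I ! j) r"
    and W: "mode_fibers I j W \<subseteq> mat_range V" and W': "mlrank_mode I j W' \<le> r"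
  shows "\<exists>Vh. orthonormal_mat Vh (I ! j) r \<and> fiber_span I j W' \<subseteq> mat_range Vh \<and>
    frob (I[j := r]) (mode_prod W j (mat_adjoint V) - mode_prod W' j (mat_adjoint Vh)) \<le> frob I (W - W')"
proof -
  obtain B where B: "orthonormal_mat B (I ! j) r" and W'B: "mode_fibers I j W' \<subseteq> mat_range B"
    using exists_orthonormal_mat_mode_fibers[OF W' orthonormal_mat_cols_le_rows[OF V]] by blast
  obtain Vh where "orthonormal_mat Vh (I ! j) r" "mat_range B \<subseteq> mat_range Vh"
    "frob (I[j := r]) (mode_prod W j (mat_adjoint V) - mode_prod W' j (mat_adjoint Vh)) \<le> frob I (W - W')"
    using mode_prod_orthonormal_step[OF j V B W W'B] by blast
  then show ?thesis
    using fiber_span_subset_mat_range[OF orthonormal_matD(1)[OF B] W'B] by blast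
qed

lemma compress_Nil [simp]: "compress X [] = X"
  unfolding compress_def by simp

lemma compress_snoc: "compress X (Vs @ [V]) = mode_prod (compress X Vs) (length Vs) (mat_adjoint V)"
  unfolding compress_def by simp

lemma mode_fibers_mode_prod_subset:
  fixes X :: "'a::comm_ring_1 tensor"
  assumes ik: "i \<noteq> k" and i: "i < length J" and k: "k < length J"
    and M: "M \<in> carrier_mat m (J ! k)" and C: "C \<in> carrier_mat (J ! i) q"
    and X: "mode_fibers J i X \<subseteq> mat_range C"
  shows "mode_fibers (J[k := m]) i (mode_prod X k M) \<subseteq> mat_range C"
proof
  fix v
  assume "v \<in> mode_fibers (J[k := m]) i (mode_prod X k M)"
  then obtain p where p: "p \<in> tidx (J[k := m])" and v: "v = fiber (mode_prod X k M) (J[k := m]) i p"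
    unfolding mode_fibers_def by blast
  have lp: "length p = length J"
    using p unfolding tidx_def by simp
  have "\<exists>z. z \<in> carrier_vec q \<and> fiber X J i (p[k := t]) = C *\<^sub>v z" if t: "t < J ! k" for t
  proof -
    have "p[k := t] \<in> tidx J"
      by (rule tidx_list_update[OF p t k])
    then show ?thesis
      using X C unfolding mode_fibers_def mat_range_def by auto
  qed
  then obtain z where z: "\<And>t. t < J ! k \<Longrightarrow> z t \<in> carrier_vec q \<and> fiber X J i (p[k := t]) = C *\<^sub>v z t"
    by metis
  define zz where "zz = vec q (\<lambda>l. \<Sum>t<J ! k. M $$ (p ! k, t) * z t $ l)"
  have Ji: "J[k := m] ! i = J ! i"
    using ik by simp
  have "v = C *\<^sub>v zz"
  proof (rule eq_vecI)
    fix s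
    assume "s < dim_vec (C *\<^sub>v zz)"
    then have s: "s < J ! i"
      using C by simp
    have "v $ s = (\<Sum>t<J ! k. M $$ (p ! k, t) * X (p[k := t, i := s]))"
      unfolding v mode_prod_def using s Ji M ik lp i k by (simp add: list_update_swap)
    also have "\<dots> = (\<Sum>t<J ! k. M $$ (p ! k, t) * (\<Sum>l<q. C $$ (s, l) * z t $ l))"
    proof (intro sum.cong refl)
      fix t
      assume "t \<in> {..<J ! k}"
      then have zt: "z t \<in> carrier_vec q" "fiber X J i (p[k := t]) = C *\<^sub>v z t"
        using z by auto
      have "X (p[k := t, i := s]) = (C *\<^sub>v z t) $ s"
        using zt(2) s by (metis fiber_index)
      also have "\<dots> = (\<Sum>l<q. C $$ (s, l) * z t $ l)"
        using C s zt(1) by (simp add: scalar_prod_def atLeast0LessThan)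
      finally show "M $$ (p ! k, t) * X (p[k := t, i := s]) = M $$ (p ! k, t) * (\<Sum>l<q. C $$ (s, l) * z t $ l)"
        by simp
    qed
    also have "\<dots> = (\<Sum>l<q. C $$ (s, l) * (\<Sum>t<J ! k. M $$ (p ! k, t) * z t $ l))"
      by (simp add: sum_distrib_left sum_distrib_right mult_ac, subst sum.swap, rule refl)
    also have "\<dots> = (C *\<^sub>v zz) $ s"
      using C s unfolding zz_def by (simp add: scalar_prod_def atLeast0LessThan)
    finally show "v $ s = (C *\<^sub>v zz) $ s" .
  qed (use C Ji v in simp)
  moreover have "zz \<in> carrier_vec q"
    unfolding zz_def by simp
  ultimately show "v \<in> mat_range C"
    unfolding mat_range_def using C by auto
qed

definition compressed_dims :: "nat list \<Rightarrow> nat list \<Rightarrow> nat \<Rightarrow> nat list" where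
  "compressed_dims Rs I k = take k Rs @ drop k I"

lemma compressed_dims_length:
  "length Rs = length I \<Longrightarrow> length (compressed_dims Rs I k) = length I"
  unfolding compressed_dims_def by simp

lemma compressed_dims_nth:
  "length Rs = length I \<Longrightarrow> i < length I \<Longrightarrow>
    compressed_dims Rs I k ! i = (if i < k then Rs ! i else I ! i)"
  unfolding compressed_dims_def by (auto simp: nth_append min_def)

lemma compressed_dims_0 [simp]: "compressed_dims Rs I 0 = I"
  unfolding compressed_dims_def by simp

lemma compressed_dims_all: "length Rs = length I \<Longrightarrow> compressed_dims Rs I (length I) = Rs"
  unfolding compressed_dims_def by simp

lemma compressed_dims_Suc:
  assumes "length Rs = length I" "k < length I"
  shows "compressed_dims Rs I (Suc k) = (compressed_dims Rs I k)[k := Rs ! k]"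
  by (rule nth_equalityI) (use assms in \<open>auto simp: compressed_dims_length compressed_dims_nth nth_list_update\<close>)

lemma mode_fibers_compress_subset:
  fixes X :: "'a::conjugatable_field tensor"
  assumes len: "length Rs = length I" and i: "length Ms \<le> i" "i < length I"
    and Ms: "\<forall>l<length Ms. Ms ! l \<in> carrier_mat (I ! l) (Rs ! l)"
    and C: "C \<in> carrier_mat (I ! i) q" and X: "mode_fibers I i X \<subseteq> mat_range C"
  shows "mode_fibers (compressed_dims Rs I (length Ms)) i (compress X Ms) \<subseteq> mat_range C"
  using i Ms
proof (induct Ms rule: rev_induct)
  case Nil
  then show ?case
    using X by simp
next
  case (snoc M Ms)
  let ?k = "length Ms" and ?J = "compressed_dims Rs I (length Ms)"
  have k: "?k < length I" "?k \<noteq> i"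
    using snoc.prems by auto
  have J: "length ?J = length I" "?J ! ?k = I ! ?k" "?J ! i = I ! i"
    using compressed_dims_length[OF len] compressed_dims_nth[OF len] k snoc.prems by auto
  have "M \<in> carrier_mat (I ! ?k) (Rs ! ?k)"
    using snoc.prems(3)[rule_format, of ?k] by simp
  then have M: "mat_adjoint M \<in> carrier_mat (Rs ! ?k) (?J ! ?k)"
    using J by simp
  have "\<forall>l<?k. Ms ! l \<in> carrier_mat (I ! l) (Rs ! l)"
    using snoc.prems(3) by (metis length_append_singleton less_SucI nth_append)
  then have "mode_fibers ?J i (compress X Ms) \<subseteq> mat_range C"
    using snoc.hyps snoc.prems(1,2) by simp
  moreover have "C \<in> carrier_mat (?J ! i) q"
    using C J by simp
  ultimately have "mode_fibers (?J[?k := Rs ! ?k]) i (mode_prod (compress X Ms) ?k (mat_adjoint M))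
      \<subseteq> mat_range C"
    using mode_fibers_mode_prod_subset[OF _ _ _ M] k snoc.prems(2) J(1) by metis
  then show ?case
    unfolding compress_snoc using compressed_dims_Suc[OF len k(1)] by simp
qed

lemma compress_modes_frob_le:
  fixes W W' :: "'a::rc_field tensor"
  assumes len: "length Rs = length I" "length Vs = length I"
    and Vs: "\<And>i. i < length I \<Longrightarrow> orthonormal_mat (Vs ! i) (I ! i) (Rs ! i) \<and> mode_fibers I i W \<subseteq> mat_range (Vs ! i)"
    and Bs: "\<And>i. i < length I \<Longrightarrow> orthonormal_mat (Bs ! i) (I ! i) (Rs ! i) \<and> mode_fibers I i W' \<subseteq> mat_range (Bs ! i)"
  shows "k \<le> length I \<Longrightarrow> \<exists>Vhs. length Vhs = k \<and>
    (\<forall>i<k. orthonormal_mat (Vhs ! i) (I ! i) (Rs ! i) \<and> mat_range (Bs ! i) \<subseteq> mat_range (Vhs ! i)) \<and>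
    frob (compressed_dims Rs I k) (compress W (take k Vs) - compress W' Vhs) \<le> frob I (W - W')"
proof (induct k)
  case 0
  then show ?case
    by simp
next
  case (Suc k)
  have k: "k < length I"
    using Suc.prems by simp
  from Suc.hyps[OF less_imp_le[OF k]] obtain Vhs where Vhs: "length Vhs = k"
    "\<forall>i<k. orthonormal_mat (Vhs ! i) (I ! i) (Rs ! i) \<and> mat_range (Bs ! i) \<subseteq> mat_range (Vhs ! i)"
    and le: "frob (compressed_dims Rs I k) (compress W (take k Vs) - compress W' Vhs) \<le> frob I (W - W')"
    by blast
  let ?J = "compressed_dims Rs I k" and ?X = "compress W (take k Vs)" and ?Y = "compress W' Vhs"
  have J: "k < length ?J" "?J ! k = I ! k"
    using compressed_dims_length[OF len(1)] compressed_dims_nth[OF len(1) k] k by auto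
  have V: "orthonormal_mat (Vs ! k) (?J ! k) (Rs ! k)" "mode_fibers I k W \<subseteq> mat_range (Vs ! k)"
    and B: "orthonormal_mat (Bs ! k) (?J ! k) (Rs ! k)" "mode_fibers I k W' \<subseteq> mat_range (Bs ! k)"
    using Vs[OF k] Bs[OF k] J(2) by auto
  have "\<forall>l<length (take k Vs). take k Vs ! l \<in> carrier_mat (I ! l) (Rs ! l)"
    using Vs orthonormal_matD(1) len(2) k by (metis length_take min.absorb4 nth_take order.strict_trans)
  from mode_fibers_compress_subset[OF len(1) _ k this orthonormal_matD(1)[OF Vs[OF k, THEN conjunct1]] V(2)]
  have X: "mode_fibers ?J k ?X \<subseteq> mat_range (Vs ! k)"
    using len(2) k by simp
  have "\<forall>l<length Vhs. Vhs ! l \<in> carrier_mat (I ! l) (Rs ! l)"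
    using Vhs orthonormal_matD(1) by metis
  from mode_fibers_compress_subset[OF len(1) _ k this orthonormal_matD(1)[OF Bs[OF k, THEN conjunct1]] B(2)]
  have Y: "mode_fibers ?J k ?Y \<subseteq> mat_range (Bs ! k)"
    using Vhs(1) by simp
  obtain Vh where Vh: "orthonormal_mat Vh (?J ! k) (Rs ! k)" "mat_range (Bs ! k) \<subseteq> mat_range Vh"
    and step: "frob (?J[k := Rs ! k]) (mode_prod ?X k (mat_adjoint (Vs ! k)) - mode_prod ?Y k (mat_adjoint Vh))
      \<le> frob ?J (?X - ?Y)"
    using mode_prod_orthonormal_step[OF J(1) V(1) B(1) X Y] by blast
  have "take (Suc k) Vs = take k Vs @ [Vs ! k]"
    using k len(2) by (simp add: take_Suc_conv_app_nth)
  then have "frob (compressed_dims Rs I (Suc k)) (compress W (take (Suc k) Vs) - compress W' (Vhs @ [Vh]))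
      \<le> frob I (W - W')"
    using step le compressed_dims_Suc[OF len(1) k] Vhs(1) k len(2) by (simp add: compress_snoc)
  moreover have "\<forall>i<Suc k. orthonormal_mat ((Vhs @ [Vh]) ! i) (I ! i) (Rs ! i) \<and>
      mat_range (Bs ! i) \<subseteq> mat_range ((Vhs @ [Vh]) ! i)"
    using Vhs Vh J(2) by (auto simp: nth_append less_Suc_eq)
  moreover have "length (Vhs @ [Vh]) = Suc k"
    using Vhs(1) by simp
  ultimately show ?case
    by blast
qed

lemma orth_compression_matsI:
  assumes "length Vs = length I" "length Rs = length I"
    and "\<And>i. i < length I \<Longrightarrow> orthonormal_mat (Vs ! i) (I ! i) (Rs ! i) \<and> mode_fibers I i X \<subseteq> mat_range (Vs ! i)"
  shows "orth_compression_mats I X Rs Vs"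
proof -
  have "fiber_span I i X \<subseteq> mat_range (Vs ! i)" if "i < length I" for i
    using assms(3)[OF that] fiber_span_subset_mat_range orthonormal_matD(1) by blast
  then show ?thesis
    unfolding orth_compression_mats_def using assms unfolding orthonormal_mat_def by auto
qed

theorem exists_orth_compressions_frob_le:
  fixes W W' :: "'a::rc_field tensor"
  assumes len: "length Rs = length I"
    and ranks: "\<And>i. i < length I \<Longrightarrow> mlrank_mode I i W \<le> Rs ! i \<and> mlrank_mode I i W' \<le> Rs ! i \<and> Rs ! i \<le> I ! i"
  shows "\<exists>Vs Vhs. orth_compression_mats I W Rs Vs \<and> orth_compression_mats I W' Rs Vhs \<and>
    frob Rs (compress W Vs - compress W' Vhs) \<le> frob I (W - W')"
proof -
  define basis where "basis X i = (SOME V. orthonormal_mat V (I ! i) (Rs ! i) \<and> mode_fibers I i X \<subseteq> mat_range V)"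
    for X :: "'a tensor" and i
  have basis: "orthonormal_mat (basis X i) (I ! i) (Rs ! i) \<and> mode_fibers I i X \<subseteq> mat_range (basis X i)"
    if "i < length I" "mlrank_mode I i X \<le> Rs ! i" for X :: "'a tensor" and i
  proof -
    have "\<exists>V. orthonormal_mat V (I ! i) (Rs ! i) \<and> mode_fibers I i X \<subseteq> mat_range V"
      by (rule exists_orthonormal_mat_mode_fibers) (use that ranks in auto)
    then show ?thesis
      unfolding basis_def by (rule someI_ex)
  qed
  define Vs where "Vs = map (basis W) [0..<length I]"
  define Bs where "Bs = map (basis W') [0..<length I]"
  have Vs: "length Vs = length I"
    "\<And>i. i < length I \<Longrightarrow> orthonormal_mat (Vs ! i) (I ! i) (Rs ! i) \<and> mode_fibers I i W \<subseteq> mat_range (Vs ! i)"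
    unfolding Vs_def using basis ranks by simp_all
  have Bs: "\<And>i. i < length I \<Longrightarrow> orthonormal_mat (Bs ! i) (I ! i) (Rs ! i) \<and> mode_fibers I i W' \<subseteq> mat_range (Bs ! i)"
    unfolding Bs_def using basis ranks by simp
  obtain Vhs where Vhs: "length Vhs = length I"
    "\<forall>i<length I. orthonormal_mat (Vhs ! i) (I ! i) (Rs ! i) \<and> mat_range (Bs ! i) \<subseteq> mat_range (Vhs ! i)"
    and le: "frob Rs (compress W Vs - compress W' Vhs) \<le> frob I (W - W')"
    using compress_modes_frob_le[OF len Vs(1) Vs(2) Bs le_refl] Vs(1) compressed_dims_all[OF len] by auto
  have "orth_compression_mats I W Rs Vs"
    by (rule orth_compression_matsI[OF Vs(1) len Vs(2)])
  moreover have "orth_compression_mats I W' Rs Vhs"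
    using Vhs Bs by (intro orth_compression_matsI[OF Vhs(1) len]) blast
  ultimately show ?thesis
    using le by blast
qed

theorem theorem4p1:
  fixes I R Rh :: "nat list"
    and W' Wh' :: "'a::rc_field tensor"
  assumes rW: "has_mlrank I W' R"
    and rWh: "has_mlrank I Wh' Rh"
  shows
    "(\<forall>j V. j < length I \<longrightarrow> V \<in> carrier_mat (I ! j) (R ! j) \<longrightarrow> orthonormal_cols V \<longrightarrow>
        mat_range V = fiber_span I j W' \<longrightarrow> Rh ! j \<le> R ! j \<longrightarrow>
        (\<exists>Vh. Vh \<in> carrier_mat (I ! j) (R ! j) \<and> orthonormal_cols Vh \<and>
              fiber_span I j Wh' \<subseteq> mat_range Vh \<and>
              frob (I[j := R ! j]) (mode_prod W' j (mat_adjoint V) - mode_prod Wh' j (mat_adjoint Vh))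
                \<le> frob I (W' - Wh')))
   \<and> (let Rs = map2 max R Rh in
        \<exists>Vs Vhs. orth_compression_mats I W' Rs Vs \<and> orth_compression_mats I Wh' Rs Vhs \<and>
          frob Rs (compress W' Vs - compress Wh' Vhs) \<le> frob I (W' - Wh'))"
proof (intro conjI allI impI)
  fix j V
  assume j: "j < length I" and V: "V \<in> carrier_mat (I ! j) (R ! j)" "orthonormal_cols V"
    and range: "mat_range V = fiber_span I j W'" and le: "Rh ! j \<le> R ! j"
  have "mlrank_mode I j Wh' \<le> R ! j"
    using rWh j le unfolding has_mlrank_def by simp
  then show "\<exists>Vh. Vh \<in> carrier_mat (I ! j) (R ! j) \<and> orthonormal_cols Vh \<and>
      fiber_span I j Wh' \<subseteq> mat_range Vh \<and>
      frob (I[j := R ! j]) (mode_prod W' j (mat_adjoint V) - mode_prod Wh' j (mat_adjoint Vh)) \<le> frob I (W' - Wh')"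
    using exists_orthonormal_mode_compression[OF j, of V "R ! j" W' Wh'] V range
      mode_fibers_subset_fiber_span unfolding orthonormal_mat_def by blast
next
  have len: "length R = length I" "length Rh = length I"
    using rW rWh unfolding has_mlrank_def by auto
  have ranks: "mlrank_mode I i W' = R ! i" "mlrank_mode I i Wh' = Rh ! i" if "i < length I" for i
    using rW rWh that unfolding has_mlrank_def by auto
  then have "R ! i \<le> I ! i" "Rh ! i \<le> I ! i" if "i < length I" for i
    using mlrank_mode_le that by metis+
  then show "let Rs = map2 max R Rh in \<exists>Vs Vhs. orth_compression_mats I W' Rs Vs \<and>
      orth_compression_mats I Wh' Rs Vhs \<and> frob Rs (compress W' Vs - compress Wh' Vhs) \<le> frob I (W' - Wh')"
    unfolding Let_def using len ranks
    by (intro exists_orth_compressions_frob_le) auto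
qed

end
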